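(* Every local derivation of the super Virasoro algebra $\mathrm{SVir}[0]$ is a derivation.
   Context: The super Virasoro algebra $\mathrm{SVir}[0]$ is the Lie superalgebra over $\mathbb{C}$ with basis $\{L_m, G_r, C : m\in\mathbb{Z}, r\in\mathbb{Z}\}$, even part spanned by the $L_m$ and $C$, odd part spanned by the $G_r$, and brackets $[L_m,L_n]=(m-n)L_{m+n}+\frac{1}{12}\delta_{m+n,0}(m^3-m)C$, $[L_m,G_r]=(\frac m2-r)G_{m+r}$, $[G_r,G_s]=2L_{r+s}+\frac13\delta_{r+s,0}(r^2-\frac14)C$, with $C$ central. A homogeneous linear map $D$ of parity $|D|\in\mathbb{Z}_2$ on a Lie superalgebra $L$ is a derivation if $D([x,y])=[D(x),y]+(-1)^{|D||x|}[x,D(y)]$ for all homogeneous $x,y$; $\mathrm{Der}(L)$ is the space of derivations (sums of even and odd derivations). A linear map $\Delta:L\to L$ is a local derivation if for every $x\in L$ there is a derivation $D_x\in\mathrm{Der}(L)$ with $\Delta(x)=D_x(x)$. *)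

theory Defs
  imports Complex_Main
begin

text \<open>The super Virasoro algebra SVir[0] over the complex numbers, realised as the
  space of finitely supported coefficient functions on the basis
  L_m (m in Z), G_r (r in Z), C.\<close>

datatype sv_idx = Lb int | Gb int | Cb

fun sv_par :: "sv_idx \<Rightarrow> bool" where
  "sv_par (Gb r) = True"
| "sv_par (Lb m) = False"
| "sv_par Cb = False"

fun sv_bb :: "sv_idx \<Rightarrow> sv_idx \<Rightarrow> sv_idx \<Rightarrow> complex" where
  "sv_bb (Lb m) (Lb n) k =
     (if k = Lb (m + n) then of_int (m - n)
      else if k = Cb \<and> m + n = 0 then (of_int m ^ 3 - of_int m) / 12 else 0)"
| "sv_bb (Lb m) (Gb r) k =
     (if k = Gb (m + r) then of_int m / 2 - of_int r else 0)"
| "sv_bb (Gb r) (Lb m) k =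
     (if k = Gb (m + r) then - (of_int m / 2 - of_int r) else 0)"
| "sv_bb (Gb r) (Gb s) k =
     (if k = Lb (r + s) then 2
      else if k = Cb \<and> r + s = 0 then (of_int r ^ 2 - 1 / 4) / 3 else 0)"
| "sv_bb Cb j k = 0"
| "sv_bb i Cb k = 0"

definition sv_carrier :: "(sv_idx \<Rightarrow> complex) set" where
  "sv_carrier = {f. finite {i. f i \<noteq> 0}}"

definition sv_br :: "(sv_idx \<Rightarrow> complex) \<Rightarrow> (sv_idx \<Rightarrow> complex) \<Rightarrow> sv_idx \<Rightarrow> complex" where
  "sv_br f g = (\<lambda>k. \<Sum>i\<in>{i. f i \<noteq> 0}. \<Sum>j\<in>{j. g j \<noteq> 0}. f i * g j * sv_bb i j k)"

definition sv_hom :: "bool \<Rightarrow> (sv_idx \<Rightarrow> complex) \<Rightarrow> bool" where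
  "sv_hom p f \<longleftrightarrow> f \<in> sv_carrier \<and> (\<forall>i. f i \<noteq> 0 \<longrightarrow> sv_par i = p)"

definition sv_linear :: "((sv_idx \<Rightarrow> complex) \<Rightarrow> (sv_idx \<Rightarrow> complex)) \<Rightarrow> bool" where
  "sv_linear D \<longleftrightarrow>
     (\<forall>x\<in>sv_carrier. D x \<in> sv_carrier) \<and>
     (\<forall>x\<in>sv_carrier. \<forall>y\<in>sv_carrier. D (\<lambda>k. x k + y k) = (\<lambda>k. D x k + D y k)) \<and>
     (\<forall>c. \<forall>x\<in>sv_carrier. D (\<lambda>k. c * x k) = (\<lambda>k. c * D x k))"

definition sv_derivation :: "bool \<Rightarrow> ((sv_idx \<Rightarrow> complex) \<Rightarrow> (sv_idx \<Rightarrow> complex)) \<Rightarrow> bool" where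
  "sv_derivation p D \<longleftrightarrow>
     sv_linear D \<and>
     (\<forall>q x. sv_hom q x \<longrightarrow> sv_hom (p \<noteq> q) (D x)) \<and>
     (\<forall>q r x y. sv_hom q x \<longrightarrow> sv_hom r y \<longrightarrow>
        D (sv_br x y) = (\<lambda>k. sv_br (D x) y k + (if p \<and> q then -1 else 1) * sv_br x (D y) k))"

definition sv_Der :: "((sv_idx \<Rightarrow> complex) \<Rightarrow> (sv_idx \<Rightarrow> complex)) \<Rightarrow> bool" where
  "sv_Der D \<longleftrightarrow> (\<exists>D0 D1. sv_derivation False D0 \<and> sv_derivation True D1 \<and>
      (\<forall>x\<in>sv_carrier. D x = (\<lambda>k. D0 x k + D1 x k)))"

definition sv_local_derivation :: "((sv_idx \<Rightarrow> complex) \<Rightarrow> (sv_idx \<Rightarrow> complex)) \<Rightarrow> bool" where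
  "sv_local_derivation \<Delta> \<longleftrightarrow> sv_linear \<Delta> \<and>
      (\<forall>x\<in>sv_carrier. \<exists>D. sv_Der D \<and> \<Delta> x = D x)"

end

theory Submission
  imports Defs
begin

text \<open>
  Every derivation of SVir[0] is inner. Since \<open>ad L_0\<close> acts on vectors of weight n by \<open>-n\<close>, a
  derivation D agrees off the weight diagonal with \<open>ad b\<close>, where b is \<open>D L_0\<close> with its weight-n
  part divided by n; on the diagonal the super Leibniz rule on finitely many basis brackets
  leaves only \<open>ad (\<lambda> L_0 + \<mu> G_0)\<close>. Conversely every \<open>ad a\<close> is an even plus an odd derivation by
  the super Jacobi identity. So a local derivation \<open>\<Delta>\<close> is a linear map with \<open>\<Delta> x = [a_x, x]\<close>
  for every x, and a single a has to be found.

  Subtracting \<open>ad a_L_0\<close> we may assume \<open>\<Delta> L_0 = 0\<close>. Conjugating by the grading automorphisms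
  \<open>e_i \<mapsto> t^wt(i) e_i\<close> and separating the powers of t (a Vandermonde argument), the weight-k part of
  \<open>\<Delta>\<close> is again of the form \<open>[a, -]\<close> on every sum of two basis vectors. For basis vectors of far
  apart weights, \<open>y_1 + y_2 = [a, e_f] + [a, e_F]\<close> becomes a two-term recurrence for the
  coefficients of a along an arithmetic progression, which finite support forces to vanish. This
  kills the weight-k parts for \<open>k \<noteq> 0\<close> and identifies the weight-0 part with \<open>ad (\<lambda> L_0 + \<mu> G_0)\<close>.
\<close>

section \<open>The bracket on finitely supported functions\<close>

fun sv_wt :: "sv_idx \<Rightarrow> int" where
  "sv_wt (Lb m) = m" | "sv_wt (Gb r) = r" | "sv_wt Cb = 0"

definition sv_basis :: "sv_idx \<Rightarrow> sv_idx \<Rightarrow> complex" where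
  "sv_basis j = (\<lambda>k. if k = j then 1 else 0)"

definition sv_supp :: "(sv_idx \<Rightarrow> complex) \<Rightarrow> sv_idx set" where
  "sv_supp f = {i. f i \<noteq> 0}"

lemma sv_carrier_iff: "f \<in> sv_carrier \<longleftrightarrow> finite (sv_supp f)"
  by (simp add: sv_carrier_def sv_supp_def)

lemma sv_bb_wt: "sv_bb i j k \<noteq> 0 \<Longrightarrow> sv_wt k = sv_wt i + sv_wt j"
  by (cases i; cases j; cases k) (auto split: if_splits)

lemma sv_bb_par: "sv_bb i j k \<noteq> 0 \<Longrightarrow> sv_par k = (sv_par i \<noteq> sv_par j)"
  by (cases i; cases j; cases k) (auto split: if_splits)

lemma sv_bb_Cb_right[simp]: "sv_bb i Cb k = 0"
  by (cases i) auto

lemma sv_bb_supp: "{k. sv_bb i j k \<noteq> 0} \<subseteq> {Lb (sv_wt i + sv_wt j), Gb (sv_wt i + sv_wt j), Cb}"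
proof
  fix k assume "k \<in> {k. sv_bb i j k \<noteq> 0}"
  then have "sv_wt k = sv_wt i + sv_wt j" using sv_bb_wt by auto
  then show "k \<in> {Lb (sv_wt i + sv_wt j), Gb (sv_wt i + sv_wt j), Cb}" by (cases k) auto
qed

lemma finite_sv_bb_supp: "finite {k. sv_bb i j k \<noteq> 0}"
  using sv_bb_supp finite_subset by blast

lemma sv_basis_carrier[simp]: "sv_basis j \<in> sv_carrier"
  by (simp add: sv_carrier_def sv_basis_def)

lemma sv_supp_basis: "sv_supp (sv_basis j) = {j}"
  by (auto simp: sv_supp_def sv_basis_def)

lemma sv_br_eq_sum:
  assumes "finite S" "finite T" "sv_supp f \<subseteq> S" "sv_supp g \<subseteq> T"
  shows "sv_br f g k = (\<Sum>i\<in>S. \<Sum>j\<in>T. f i * g j * sv_bb i j k)"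
proof -
  have "sv_br f g k = (\<Sum>i\<in>sv_supp f. \<Sum>j\<in>sv_supp g. f i * g j * sv_bb i j k)"
    by (simp add: sv_br_def sv_supp_def)
  also have "\<dots> = (\<Sum>i\<in>sv_supp f. \<Sum>j\<in>T. f i * g j * sv_bb i j k)"
    by (rule sum.cong[OF refl], rule sum.mono_neutral_left) (use assms in \<open>auto simp: sv_supp_def\<close>)
  also have "\<dots> = (\<Sum>i\<in>S. \<Sum>j\<in>T. f i * g j * sv_bb i j k)"
    by (rule sum.mono_neutral_left) (use assms in \<open>auto simp: sv_supp_def\<close>)
  finally show ?thesis .
qed

lemma sv_br_infinite_left: "\<not> finite (sv_supp f) \<Longrightarrow> sv_br f g = (\<lambda>k. 0)"
  by (simp add: sv_br_def sv_supp_def)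
lemma sv_br_infinite_right: "\<not> finite (sv_supp g) \<Longrightarrow> sv_br f g = (\<lambda>k. 0)"
  by (simp add: sv_br_def sv_supp_def)

lemma sv_br_carrier: "sv_br f g \<in> sv_carrier"
proof (cases "finite (sv_supp f) \<and> finite (sv_supp g)")
  case True
  let ?K = "\<Union>i\<in>sv_supp f. \<Union>j\<in>sv_supp g. {k. sv_bb i j k \<noteq> 0}"
  have fin: "finite ?K" using True finite_sv_bb_supp by auto
  have "sv_supp (sv_br f g) \<subseteq> ?K"
  proof
    fix k assume k: "k \<in> sv_supp (sv_br f g)"
    show "k \<in> ?K"
    proof (rule ccontr)
      assume "k \<notin> ?K"
      then have "sv_br f g k = 0" unfolding sv_br_def
        by (intro sum.neutral ballI) (auto simp: sv_supp_def)
      with k show False by (simp add: sv_supp_def)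
    qed
  qed
  then show ?thesis using fin finite_subset sv_carrier_iff by blast
next
  case False
  then show ?thesis by (auto simp: sv_br_infinite_left sv_br_infinite_right sv_carrier_def)
qed

lemma sv_br_basis: "sv_br (sv_basis i) (sv_basis j) = sv_bb i j"
proof
  fix k show "sv_br (sv_basis i) (sv_basis j) k = sv_bb i j k"
    by (subst sv_br_eq_sum[of "{i}" "{j}"]) (simp_all add: sv_supp_basis, simp add: sv_basis_def)
qed

lemma sv_carrier_add: "f \<in> sv_carrier \<Longrightarrow> g \<in> sv_carrier \<Longrightarrow> (\<lambda>k. f k + g k) \<in> sv_carrier"
proof -
  assume a: "f \<in> sv_carrier" "g \<in> sv_carrier"
  have "sv_supp (\<lambda>k. f k + g k) \<subseteq> sv_supp f \<union> sv_supp g" by (auto simp: sv_supp_def)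
  then show ?thesis using a by (metis sv_carrier_iff finite_Un finite_subset)
qed

lemma sv_carrier_scale: "f \<in> sv_carrier \<Longrightarrow> (\<lambda>k. c * f k) \<in> sv_carrier"
proof -
  assume a: "f \<in> sv_carrier"
  have "sv_supp (\<lambda>k. c * f k) \<subseteq> sv_supp f" by (auto simp: sv_supp_def)
  then show ?thesis using a by (metis sv_carrier_iff finite_subset)
qed

lemma sv_carrier_diff: "a \<in> sv_carrier \<Longrightarrow> b \<in> sv_carrier \<Longrightarrow> (\<lambda>k. a k - b k) \<in> sv_carrier"
  using sv_carrier_add[OF _ sv_carrier_scale[of b "-1"]] by simp

lemma sv_carrier_zero[simp]: "(\<lambda>k. 0) \<in> sv_carrier"
  by (simp add: sv_carrier_def)

lemma sv_carrier_sum: "finite S \<Longrightarrow> (\<And>j. j \<in> S \<Longrightarrow> g j \<in> sv_carrier) \<Longrightarrow> (\<lambda>k. \<Sum>j\<in>S. g j k) \<in> sv_carrier"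
proof (induction S rule: finite_induct)
  case empty then show ?case by simp
next
  case (insert x F)
  then show ?case using sv_carrier_add[of "g x" "\<lambda>k. \<Sum>j\<in>F. g j k"] by simp
qed

lemma sv_br_add_left:
  assumes "f \<in> sv_carrier" "g \<in> sv_carrier"
  shows "sv_br (\<lambda>k. f k + g k) h = (\<lambda>k. sv_br f h k + sv_br g h k)"
proof (cases "finite (sv_supp h)")
  case True
  let ?S = "sv_supp f \<union> sv_supp g"
  have fS: "finite ?S" using assms sv_carrier_iff by auto
  have s: "sv_supp (\<lambda>k. f k + g k) \<subseteq> ?S" by (auto simp: sv_supp_def)
  show ?thesis
    apply (rule ext)
    apply (subst sv_br_eq_sum[OF fS True s order_refl])
    apply (subst sv_br_eq_sum[OF fS True _ order_refl, of f], force)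
    apply (subst sv_br_eq_sum[OF fS True _ order_refl, of g], force)
    by (simp add: sum.distrib[symmetric] distrib_right)
next
  case False then show ?thesis by (simp add: sv_br_infinite_right)
qed

lemma sv_br_scale_left:
  shows "sv_br (\<lambda>k. c * f k) h = (\<lambda>k. c * sv_br f h k)"
proof (cases "finite (sv_supp h) \<and> finite (sv_supp f)")
  case True
  have s: "sv_supp (\<lambda>k. c * f k) \<subseteq> sv_supp f" by (auto simp: sv_supp_def)
  show ?thesis
    apply (rule ext)
    apply (subst sv_br_eq_sum[of "sv_supp f" "sv_supp h"]) using True s apply auto[4]
    apply (subst sv_br_eq_sum[of "sv_supp f" "sv_supp h"]) using True apply auto[4]
    by (simp add: sum_distrib_left mult.assoc)
next
  case False
  show ?thesis
  proof (cases "c = 0")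
    case True then show ?thesis by (simp add: sv_br_def)
  next
    case c: False
    have "sv_supp (\<lambda>k. c * f k) = sv_supp f" using c by (auto simp: sv_supp_def)
    then show ?thesis using False
      by (cases "finite (sv_supp h)") (auto simp: sv_br_infinite_left sv_br_infinite_right)
  qed
qed

lemma sv_br_add_right:
  assumes "f \<in> sv_carrier" "g \<in> sv_carrier"
  shows "sv_br h (\<lambda>k. f k + g k) = (\<lambda>k. sv_br h f k + sv_br h g k)"
proof (cases "finite (sv_supp h)")
  case True
  let ?S = "sv_supp f \<union> sv_supp g"
  have fS: "finite ?S" using assms sv_carrier_iff by auto
  have s: "sv_supp (\<lambda>k. f k + g k) \<subseteq> ?S" by (auto simp: sv_supp_def)
  show ?thesis
    apply (rule ext)
    apply (subst sv_br_eq_sum[OF True fS order_refl s])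
    apply (subst sv_br_eq_sum[OF True fS order_refl, of f], force)
    apply (subst sv_br_eq_sum[OF True fS order_refl, of g], force)
    by (simp add: sum.distrib[symmetric] distrib_right distrib_left)
next
  case False then show ?thesis by (simp add: sv_br_infinite_left)
qed

lemma sv_br_scale_right:
  shows "sv_br h (\<lambda>k. c * f k) = (\<lambda>k. c * sv_br h f k)"
proof (cases "finite (sv_supp h) \<and> finite (sv_supp f)")
  case True
  have s: "sv_supp (\<lambda>k. c * f k) \<subseteq> sv_supp f" by (auto simp: sv_supp_def)
  show ?thesis
    apply (rule ext)
    apply (subst sv_br_eq_sum[of "sv_supp h" "sv_supp f"]) using True s apply auto[4]
    apply (subst sv_br_eq_sum[of "sv_supp h" "sv_supp f"]) using True apply auto[4]
    by (simp add: sum_distrib_left mult.assoc mult.left_commute)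
next
  case False
  show ?thesis
  proof (cases "c = 0")
    case True then show ?thesis by (simp add: sv_br_def)
  next
    case c: False
    have "sv_supp (\<lambda>k. c * f k) = sv_supp f" using c by (auto simp: sv_supp_def)
    then show ?thesis using False
      by (cases "finite (sv_supp h)") (auto simp: sv_br_infinite_left sv_br_infinite_right)
  qed
qed

lemma sv_br_sum_left:
  assumes "finite S" "\<And>j. j \<in> S \<Longrightarrow> g j \<in> sv_carrier"
  shows "sv_br (\<lambda>k. \<Sum>j\<in>S. g j k) h = (\<lambda>k. \<Sum>j\<in>S. sv_br (g j) h k)"
  using assms
proof (induction S rule: finite_induct)
  case empty
  then show ?case by (simp add: sv_br_def)
next
  case (insert x F)
  have "sv_br (\<lambda>k. \<Sum>j\<in>insert x F. g j k) h = sv_br (\<lambda>k. g x k + (\<Sum>j\<in>F. g j k)) h"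
    using insert by simp
  also have "\<dots> = (\<lambda>k. sv_br (g x) h k + sv_br (\<lambda>k. \<Sum>j\<in>F. g j k) h k)"
    by (rule sv_br_add_left) (use insert sv_carrier_sum in auto)
  finally show ?case using insert by simp
qed

lemma sv_br_sum_right:
  assumes "finite S" "\<And>j. j \<in> S \<Longrightarrow> g j \<in> sv_carrier"
  shows "sv_br h (\<lambda>k. \<Sum>j\<in>S. g j k) = (\<lambda>k. \<Sum>j\<in>S. sv_br h (g j) k)"
  using assms
proof (induction S rule: finite_induct)
  case empty
  then show ?case by (simp add: sv_br_def)
next
  case (insert x F)
  have "sv_br h (\<lambda>k. \<Sum>j\<in>insert x F. g j k) = sv_br h (\<lambda>k. g x k + (\<Sum>j\<in>F. g j k))"
    using insert by simp
  also have "\<dots> = (\<lambda>k. sv_br h (g x) k + sv_br h (\<lambda>k. \<Sum>j\<in>F. g j k) k)"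
    by (rule sv_br_add_right) (use insert sv_carrier_sum in auto)
  finally show ?case using insert by simp
qed

lemma sv_basis_expansion:
  assumes "finite S" "sv_supp f \<subseteq> S"
  shows "f = (\<lambda>k. \<Sum>j\<in>S. f j * sv_basis j k)"
proof
  fix k
  have "(\<Sum>j\<in>S. f j * sv_basis j k) = (if k \<in> S then f k else 0)"
    by (simp add: sv_basis_def assms(1) if_distrib cong: if_cong)
  then show "f k = (\<Sum>j\<in>S. f j * sv_basis j k)" using assms by (auto simp: sv_supp_def)
qed

lemma sv_linear_zero: "sv_linear D \<Longrightarrow> D (\<lambda>k. 0) = (\<lambda>k. 0)"
proof -
  assume "sv_linear D"
  then have "\<forall>x\<in>sv_carrier. D (\<lambda>k. 0 * x k) = (\<lambda>k. 0 * D x k)"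
    unfolding sv_linear_def by blast
  from this[rule_format, OF sv_carrier_zero] show ?thesis by simp
qed

lemma sv_linear_sum:
  assumes "sv_linear D" "finite S" "\<And>j. j \<in> S \<Longrightarrow> g j \<in> sv_carrier"
  shows "D (\<lambda>k. \<Sum>j\<in>S. g j k) = (\<lambda>k. \<Sum>j\<in>S. D (g j) k)"
  using assms(2,3)
proof (induction S rule: finite_induct)
  case empty
  then show ?case using sv_linear_zero[OF assms(1)] by simp
next
  case (insert x F)
  have "D (\<lambda>k. \<Sum>j\<in>insert x F. g j k) = D (\<lambda>k. g x k + (\<Sum>j\<in>F. g j k))"
    using insert by simp
  also have "\<dots> = (\<lambda>k. D (g x) k + D (\<lambda>k. \<Sum>j\<in>F. g j k) k)"
    using assms(1) insert sv_carrier_sum[of F g] unfolding sv_linear_def by auto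
  finally show ?case using insert by simp
qed

lemma sv_linear_expand:
  assumes "sv_linear D" "f \<in> sv_carrier"
  shows "D f = (\<lambda>k. \<Sum>j\<in>sv_supp f. f j * D (sv_basis j) k)"
proof -
  have fin: "finite (sv_supp f)" using assms sv_carrier_iff by auto
  have "D f = D (\<lambda>k. \<Sum>j\<in>sv_supp f. f j * sv_basis j k)"
    using sv_basis_expansion[OF fin order_refl] by metis
  also have "\<dots> = (\<lambda>k. \<Sum>j\<in>sv_supp f. D (\<lambda>k. f j * sv_basis j k) k)"
    by (rule sv_linear_sum[OF assms(1) fin]) (simp add: sv_carrier_scale)
  also have "\<dots> = (\<lambda>k. \<Sum>j\<in>sv_supp f. f j * D (sv_basis j) k)"
    using assms(1) unfolding sv_linear_def by auto
  finally show ?thesis .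
qed

lemma sv_linear_br: "sv_linear (sv_br a)"
  unfolding sv_linear_def using sv_br_carrier sv_br_add_right sv_br_scale_right by blast

lemma sv_linear_eqI:
  assumes "sv_linear D" "sv_linear E" "\<And>j. D (sv_basis j) = E (sv_basis j)" "f \<in> sv_carrier"
  shows "D f = E f"
  using sv_linear_expand[OF assms(1,4)] sv_linear_expand[OF assms(2,4)] assms(3) by simp

lemma sv_linear_pair:
  assumes "sv_linear P"
  shows "P (\<lambda>i. s1 * sv_basis f i + s2 * sv_basis F i) = (\<lambda>i. s1 * P (sv_basis f) i + s2 * P (sv_basis F) i)"
proof -
  have add: "\<forall>x\<in>sv_carrier. \<forall>y\<in>sv_carrier. P (\<lambda>k. x k + y k) = (\<lambda>k. P x k + P y k)"
    and scl: "\<forall>c. \<forall>x\<in>sv_carrier. P (\<lambda>k. c * x k) = (\<lambda>k. c * P x k)"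
    using assms unfolding sv_linear_def by blast+
  have "P (\<lambda>i. s1 * sv_basis f i + s2 * sv_basis F i) = (\<lambda>i. P (\<lambda>i. s1 * sv_basis f i) i + P (\<lambda>i. s2 * sv_basis F i) i)"
    by (rule add[rule_format]) (simp_all add: sv_carrier_scale)
  also have "\<dots> = (\<lambda>i. s1 * P (sv_basis f) i + s2 * P (sv_basis F) i)"
    using scl sv_basis_carrier by simp
  finally show ?thesis .
qed

lemma sv_br_diff_left:
  assumes "a \<in> sv_carrier" "b \<in> sv_carrier"
  shows "sv_br (\<lambda>k. a k - b k) x = (\<lambda>i. sv_br a x i - sv_br b x i)"
proof -
  have e1: "(\<lambda>k. a k - b k) = (\<lambda>k. a k + (-1) * b k)" by simp
  have "sv_br (\<lambda>k. a k + (-1) * b k) x = (\<lambda>k. sv_br a x k + sv_br (\<lambda>k. (-1) * b k) x k)"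
    by (rule sv_br_add_left[OF assms(1) sv_carrier_scale[OF assms(2)]])
  also have "\<dots> = (\<lambda>k. sv_br a x k + (-1) * sv_br b x k)" by (simp only: sv_br_scale_left)
  finally show ?thesis unfolding e1 by simp
qed

section \<open>Brackets with basis vectors and the super Jacobi identity\<close>

lemma sv_br_basis_right_sum: "a \<in> sv_carrier \<Longrightarrow> sv_br a (sv_basis j) k = (\<Sum>i\<in>sv_supp a. a i * sv_bb i j k)"
proof -
  assume a: "a \<in> sv_carrier"
  have "sv_br a (sv_basis j) k = (\<Sum>i\<in>sv_supp a. \<Sum>j'\<in>{j}. a i * sv_basis j j' * sv_bb i j' k)"
    by (rule sv_br_eq_sum) (use a in \<open>auto simp: sv_carrier_iff sv_supp_basis\<close>)
  then show ?thesis by (simp add: sv_basis_def)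
qed

lemma sv_br_basis_left_sum: "y \<in> sv_carrier \<Longrightarrow> sv_br (sv_basis i) y k = (\<Sum>j\<in>sv_supp y. y j * sv_bb i j k)"
proof -
  assume a: "y \<in> sv_carrier"
  have "sv_br (sv_basis i) y k = (\<Sum>i'\<in>{i}. \<Sum>j\<in>sv_supp y. sv_basis i i' * y j * sv_bb i' j k)"
    by (rule sv_br_eq_sum) (use a in \<open>auto simp: sv_carrier_iff sv_supp_basis\<close>)
  then show ?thesis by (simp add: sv_basis_def)
qed

definition sv_partner :: "sv_idx \<Rightarrow> sv_idx \<Rightarrow> sv_idx" where
  "sv_partner j k = (if sv_par j = sv_par k then Lb else Gb) (sv_wt k - sv_wt j)"

lemma sv_wt_partner[simp]: "sv_wt (sv_partner j k) = sv_wt k - sv_wt j"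
  by (simp add: sv_partner_def)

lemma sv_bb_left_partner: "sv_bb i j k \<noteq> 0 \<Longrightarrow> i = sv_partner j k"
  by (cases i; cases j; cases k) (auto simp: sv_partner_def split: if_splits)

lemma sv_bb_right_partner: "sv_bb i j k \<noteq> 0 \<Longrightarrow> j = sv_partner i k"
  by (cases i; cases j; cases k) (auto simp: sv_partner_def split: if_splits)

lemma sum_supp_single:
  assumes "finite (sv_supp a)" "\<And>i. i \<noteq> q \<Longrightarrow> h i = 0"
  shows "(\<Sum>i\<in>sv_supp a. a i * h i) = a q * h q"
proof (cases "q \<in> sv_supp a")
  case True
  then show ?thesis
    using sum.remove[OF assms(1) True, of "\<lambda>i. a i * h i"] assms(2) by simp
next
  case False
  then have "h i = 0" if "i \<in> sv_supp a" for i
    using that assms(2)[of i] by auto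
  then have "(\<Sum>i\<in>sv_supp a. a i * h i) = 0"
    by (intro sum.neutral ballI) simp
  moreover have "a q = 0" using False by (simp add: sv_supp_def)
  ultimately show ?thesis by simp
qed

lemma sv_br_basis_right:
  assumes "a \<in> sv_carrier"
  shows "sv_br a (sv_basis j) k = a (sv_partner j k) * sv_bb (sv_partner j k) j k"
proof -
  have "sv_bb i j k = 0" if "i \<noteq> sv_partner j k" for i
    using sv_bb_left_partner that by blast
  then show ?thesis
    unfolding sv_br_basis_right_sum[OF assms]
    using assms by (intro sum_supp_single) (simp_all add: sv_carrier_iff)
qed

lemma sv_br_basis_left:
  assumes "y \<in> sv_carrier"
  shows "sv_br (sv_basis i) y k = y (sv_partner i k) * sv_bb i (sv_partner i k) k"
proof -
  have "sv_bb i j k = 0" if "j \<noteq> sv_partner i k" for j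
    using sv_bb_right_partner that by blast
  then show ?thesis
    unfolding sv_br_basis_left_sum[OF assms]
    using assms by (intro sum_supp_single) (simp_all add: sv_carrier_iff)
qed

lemma sv_br_right_LL: "a \<in> sv_carrier \<Longrightarrow> sv_br a (sv_basis (Lb w)) (Lb z) = a (Lb (z - w)) * of_int (z - 2*w)"
  by (simp add: sv_br_basis_right sv_partner_def)

lemma sv_br_right_LG: "a \<in> sv_carrier \<Longrightarrow> sv_br a (sv_basis (Lb w)) (Gb z) = a (Gb (z - w)) * (of_int z - 3/2 * of_int w)"
  by (simp add: sv_br_basis_right sv_partner_def field_simps)

lemma sv_br_right_LC: "a \<in> sv_carrier \<Longrightarrow> sv_br a (sv_basis (Lb w)) Cb = a (Lb (- w)) * ((of_int w - of_int w ^ 3) / 12)"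
  by (simp add: sv_br_basis_right sv_partner_def)

lemma sv_br_right_GL: "a \<in> sv_carrier \<Longrightarrow> sv_br a (sv_basis (Gb w)) (Lb z) = 2 * a (Gb (z - w))"
  by (simp add: sv_br_basis_right sv_partner_def)

lemma sv_br_right_GG: "a \<in> sv_carrier \<Longrightarrow> sv_br a (sv_basis (Gb w)) (Gb z) = a (Lb (z - w)) * ((of_int z - of_int w) / 2 - of_int w)"
  by (simp add: sv_br_basis_right sv_partner_def)

lemma sv_br_right_GC: "a \<in> sv_carrier \<Longrightarrow> sv_br a (sv_basis (Gb w)) Cb = a (Gb (- w)) * ((of_int w ^ 2 - 1/4) / 3)"
  by (simp add: sv_br_basis_right sv_partner_def)

lemma sv_basis_nonzero: "{j. sv_basis i j \<noteq> 0} = {i}"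
  by (auto simp: sv_basis_def)

lemma sv_br_right_C: "sv_br a (sv_basis Cb) = (\<lambda>k. 0)"
  by (simp add: sv_br_def sv_basis_nonzero)

lemma sv_br_left_LL: "y \<in> sv_carrier \<Longrightarrow> sv_br (sv_basis (Lb m)) y (Lb z) = y (Lb (z - m)) * of_int (2*m - z)"
  by (simp add: sv_br_basis_left sv_partner_def)

lemma sv_br_left_LG: "y \<in> sv_carrier \<Longrightarrow> sv_br (sv_basis (Lb m)) y (Gb z) = y (Gb (z - m)) * (3/2 * of_int m - of_int z)"
  by (simp add: sv_br_basis_left sv_partner_def field_simps)

lemma sv_br_left_LC: "y \<in> sv_carrier \<Longrightarrow> sv_br (sv_basis (Lb m)) y Cb = y (Lb (- m)) * ((of_int m ^ 3 - of_int m) / 12)"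
  by (simp add: sv_br_basis_left sv_partner_def)

lemma sv_br_left_GL: "y \<in> sv_carrier \<Longrightarrow> sv_br (sv_basis (Gb r)) y (Lb z) = 2 * y (Gb (z - r))"
  by (simp add: sv_br_basis_left sv_partner_def)

lemma sv_br_left_GG: "y \<in> sv_carrier \<Longrightarrow> sv_br (sv_basis (Gb r)) y (Gb z) = y (Lb (z - r)) * ((3 * of_int r - of_int z) / 2)"
  by (simp add: sv_br_basis_left sv_partner_def field_simps)

lemma sv_br_left_GC: "y \<in> sv_carrier \<Longrightarrow> sv_br (sv_basis (Gb r)) y Cb = y (Gb (- r)) * ((of_int r ^ 2 - 1/4) / 3)"
  by (simp add: sv_br_basis_left sv_partner_def)

lemma sv_br_left_C: "sv_br (sv_basis Cb) y = (\<lambda>k. 0)"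
  by (simp add: sv_br_def sv_basis_nonzero)

definition sv_sign :: "bool \<Rightarrow> bool \<Rightarrow> complex" where
  "sv_sign p q = (if p \<and> q then -1 else 1)"

lemma sv_bb_carrier[simp]: "sv_bb i j \<in> sv_carrier"
  using sv_br_carrier[of "sv_basis i" "sv_basis j"] by (simp add: sv_br_basis)

lemmas sv_br_basis_coeffs = sv_br_right_LL sv_br_right_LG sv_br_right_LC sv_br_right_GL sv_br_right_GG sv_br_right_GC sv_br_right_C sv_br_left_LL sv_br_left_LG sv_br_left_LC sv_br_left_GL sv_br_left_GG sv_br_left_GC sv_br_left_C

lemma sv_jacobi_basis:
  "sv_br (sv_basis i) (sv_bb j l) k = sv_br (sv_bb i j) (sv_basis l) k + sv_sign (sv_par i) (sv_par j) * sv_br (sv_basis j) (sv_bb i l) k"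
  \<comment> \<open>64 cases; index constraints such as \<open>m + n = 0\<close> are cast to \<open>\<complex>\<close> so that \<open>algebra\<close> can use them\<close>
  apply (cases i; cases j; cases l; cases k; (simp add: sv_br_basis_coeffs sv_sign_def)?; ((intro impI)?, (drule arg_cong[where f="complex_of_int"])?,
     (simp only: of_int_add of_int_diff of_int_minus of_int_mult)?,
     (simp add: field_simps power2_eq_square power3_eq_cube)?,
     (thin_tac "i = _", thin_tac "j = _", thin_tac "l = _", thin_tac "k = _")?, algebra?))
  done

lemma sv_br_expand_left:
  assumes "finite S" "sv_supp f \<subseteq> S"
  shows "sv_br f g = (\<lambda>k. \<Sum>i\<in>S. f i * sv_br (sv_basis i) g k)"
proof -
  have "sv_br f g = sv_br (\<lambda>k. \<Sum>i\<in>S. f i * sv_basis i k) g"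
    using sv_basis_expansion[OF assms] by metis
  also have "\<dots> = (\<lambda>k. \<Sum>i\<in>S. sv_br (\<lambda>k. f i * sv_basis i k) g k)"
    by (rule sv_br_sum_left[OF assms(1)]) (simp add: sv_carrier_scale)
  also have "\<dots> = (\<lambda>k. \<Sum>i\<in>S. f i * sv_br (sv_basis i) g k)"
    by (simp add: sv_br_scale_left)
  finally show ?thesis .
qed

lemma sv_br_expand_right:
  assumes "finite T" "sv_supp g \<subseteq> T"
  shows "sv_br f g = (\<lambda>k. \<Sum>j\<in>T. g j * sv_br f (sv_basis j) k)"
proof -
  have "sv_br f g = sv_br f (\<lambda>k. \<Sum>j\<in>T. g j * sv_basis j k)"
    using sv_basis_expansion[OF assms] by metis
  also have "\<dots> = (\<lambda>k. \<Sum>j\<in>T. sv_br f (\<lambda>k. g j * sv_basis j k) k)"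
    by (rule sv_br_sum_right[OF assms(1)]) (simp add: sv_carrier_scale)
  also have "\<dots> = (\<lambda>k. \<Sum>j\<in>T. g j * sv_br f (sv_basis j) k)"
    by (simp add: sv_br_scale_right)
  finally show ?thesis .
qed

lemma sv_br_eq_supp_sum:
  assumes "x \<in> sv_carrier" "y \<in> sv_carrier"
  shows "sv_br x y = (\<lambda>k. \<Sum>j\<in>sv_supp x. \<Sum>l\<in>sv_supp y. x j * y l * sv_bb j l k)"
  using assms by (intro ext sv_br_eq_sum) (auto simp: sv_carrier_iff)

lemma sum_rotate3:
  "(\<Sum>i\<in>A. \<Sum>l\<in>C. \<Sum>j\<in>B. f i j l) = (\<Sum>l\<in>C. \<Sum>j\<in>B. \<Sum>i\<in>A. f i j l)"
proof -
  have "(\<Sum>i\<in>A. \<Sum>l\<in>C. \<Sum>j\<in>B. f i j l) = (\<Sum>l\<in>C. \<Sum>i\<in>A. \<Sum>j\<in>B. f i j l)"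
    by (rule sum.swap)
  also have "\<dots> = (\<Sum>l\<in>C. \<Sum>j\<in>B. \<Sum>i\<in>A. f i j l)"
    by (rule sum.cong[OF refl], rule sum.swap)
  finally show ?thesis .
qed

lemma sv_br_br_expand:
  assumes "a \<in> sv_carrier" "x \<in> sv_carrier" "y \<in> sv_carrier"
  shows "sv_br a (sv_br x y) k = (\<Sum>j\<in>sv_supp x. \<Sum>l\<in>sv_supp y. \<Sum>i\<in>sv_supp a. a i * (x j * y l * sv_br (sv_basis i) (sv_bb j l) k))"
proof -
  have fx: "finite (sv_supp x)" and fy: "finite (sv_supp y)" and fa: "finite (sv_supp a)" using assms sv_carrier_iff by auto
  have "sv_br a (sv_br x y) = sv_br a (\<lambda>k. \<Sum>j\<in>sv_supp x. \<Sum>l\<in>sv_supp y. x j * y l * sv_bb j l k)"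
    using sv_br_eq_supp_sum[OF assms(2,3)] by simp
  also have "\<dots> = (\<lambda>k. \<Sum>j\<in>sv_supp x. sv_br a (\<lambda>k. \<Sum>l\<in>sv_supp y. x j * y l * sv_bb j l k) k)"
    by (rule sv_br_sum_right[OF fx]) (rule sv_carrier_sum[OF fy], rule sv_carrier_scale, rule sv_bb_carrier)
  also have "\<dots> = (\<lambda>k. \<Sum>j\<in>sv_supp x. \<Sum>l\<in>sv_supp y. sv_br a (\<lambda>k. x j * y l * sv_bb j l k) k)"
    by (subst sv_br_sum_right[OF fy]) (simp_all add: sv_carrier_scale)
  also have "\<dots> = (\<lambda>k. \<Sum>j\<in>sv_supp x. \<Sum>l\<in>sv_supp y. x j * y l * sv_br a (sv_bb j l) k)"
    by (simp add: sv_br_scale_right)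
  finally have "sv_br a (sv_br x y) k = (\<Sum>j\<in>sv_supp x. \<Sum>l\<in>sv_supp y. x j * y l * sv_br a (sv_bb j l) k)"
    by simp
  also have "\<dots> = (\<Sum>j\<in>sv_supp x. \<Sum>l\<in>sv_supp y. x j * y l * (\<Sum>i\<in>sv_supp a. a i * sv_br (sv_basis i) (sv_bb j l) k))"
    by (subst sv_br_expand_left[OF fa order_refl]) simp
  also have "\<dots> = (\<Sum>j\<in>sv_supp x. \<Sum>l\<in>sv_supp y. \<Sum>i\<in>sv_supp a. a i * (x j * y l * sv_br (sv_basis i) (sv_bb j l) k))"
    by (simp add: sum_distrib_left mult_ac)
  finally show ?thesis .
qed

lemma sv_br_br_left_expand:
  assumes "a \<in> sv_carrier" "x \<in> sv_carrier" "y \<in> sv_carrier"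
  shows "sv_br (sv_br a x) y k = (\<Sum>j\<in>sv_supp x. \<Sum>l\<in>sv_supp y. \<Sum>i\<in>sv_supp a. a i * (x j * y l * sv_br (sv_bb i j) (sv_basis l) k))"
proof -
  have fx: "finite (sv_supp x)" and fy: "finite (sv_supp y)" and fa: "finite (sv_supp a)" using assms sv_carrier_iff by auto
  have "sv_br (sv_br a x) y = sv_br (\<lambda>k. \<Sum>i\<in>sv_supp a. \<Sum>j\<in>sv_supp x. a i * x j * sv_bb i j k) y"
    using sv_br_eq_supp_sum[OF assms(1,2)] by simp
  also have "\<dots> = (\<lambda>k. \<Sum>i\<in>sv_supp a. sv_br (\<lambda>k. \<Sum>j\<in>sv_supp x. a i * x j * sv_bb i j k) y k)"
    by (rule sv_br_sum_left[OF fa]) (rule sv_carrier_sum[OF fx], rule sv_carrier_scale, rule sv_bb_carrier)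
  also have "\<dots> = (\<lambda>k. \<Sum>i\<in>sv_supp a. \<Sum>j\<in>sv_supp x. sv_br (\<lambda>k. a i * x j * sv_bb i j k) y k)"
    by (subst sv_br_sum_left[OF fx]) (simp_all add: sv_carrier_scale)
  also have "\<dots> = (\<lambda>k. \<Sum>i\<in>sv_supp a. \<Sum>j\<in>sv_supp x. a i * x j * sv_br (sv_bb i j) y k)"
    by (simp add: sv_br_scale_left)
  finally have "sv_br (sv_br a x) y k = (\<Sum>i\<in>sv_supp a. \<Sum>j\<in>sv_supp x. a i * x j * sv_br (sv_bb i j) y k)"
    by simp
  also have "\<dots> = (\<Sum>i\<in>sv_supp a. \<Sum>j\<in>sv_supp x. a i * x j * (\<Sum>l\<in>sv_supp y. y l * sv_br (sv_bb i j) (sv_basis l) k))"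
    by (subst sv_br_expand_right[OF fy order_refl]) simp
  also have "\<dots> = (\<Sum>i\<in>sv_supp a. \<Sum>j\<in>sv_supp x. \<Sum>l\<in>sv_supp y. a i * (x j * y l * sv_br (sv_bb i j) (sv_basis l) k))"
    by (simp add: sum_distrib_left mult_ac)
  also have "\<dots> = (\<Sum>j\<in>sv_supp x. \<Sum>i\<in>sv_supp a. \<Sum>l\<in>sv_supp y. a i * (x j * y l * sv_br (sv_bb i j) (sv_basis l) k))"
    by (rule sum.swap)
  also have "\<dots> = (\<Sum>j\<in>sv_supp x. \<Sum>l\<in>sv_supp y. \<Sum>i\<in>sv_supp a. a i * (x j * y l * sv_br (sv_bb i j) (sv_basis l) k))"
    by (rule sum.cong[OF refl], rule sum.swap)
  finally show ?thesis .
qed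

lemma sv_br_br_swap_expand:
  assumes "a \<in> sv_carrier" "x \<in> sv_carrier" "y \<in> sv_carrier"
  shows "sv_br x (sv_br a y) k = (\<Sum>j\<in>sv_supp x. \<Sum>l\<in>sv_supp y. \<Sum>i\<in>sv_supp a. a i * (x j * y l * sv_br (sv_basis j) (sv_bb i l) k))"
proof -
  have fx: "finite (sv_supp x)" and fy: "finite (sv_supp y)" and fa: "finite (sv_supp a)" using assms sv_carrier_iff by auto
  have "sv_br x (sv_br a y) = sv_br x (\<lambda>k. \<Sum>i\<in>sv_supp a. \<Sum>l\<in>sv_supp y. a i * y l * sv_bb i l k)"
    using sv_br_eq_supp_sum[OF assms(1,3)] by simp
  also have "\<dots> = (\<lambda>k. \<Sum>i\<in>sv_supp a. sv_br x (\<lambda>k. \<Sum>l\<in>sv_supp y. a i * y l * sv_bb i l k) k)"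
    by (rule sv_br_sum_right[OF fa]) (rule sv_carrier_sum[OF fy], rule sv_carrier_scale, rule sv_bb_carrier)
  also have "\<dots> = (\<lambda>k. \<Sum>i\<in>sv_supp a. \<Sum>l\<in>sv_supp y. sv_br x (\<lambda>k. a i * y l * sv_bb i l k) k)"
    by (subst sv_br_sum_right[OF fy]) (simp_all add: sv_carrier_scale)
  also have "\<dots> = (\<lambda>k. \<Sum>i\<in>sv_supp a. \<Sum>l\<in>sv_supp y. a i * y l * sv_br x (sv_bb i l) k)"
    by (simp add: sv_br_scale_right)
  finally have "sv_br x (sv_br a y) k = (\<Sum>i\<in>sv_supp a. \<Sum>l\<in>sv_supp y. a i * y l * sv_br x (sv_bb i l) k)"
    by simp
  also have "\<dots> = (\<Sum>i\<in>sv_supp a. \<Sum>l\<in>sv_supp y. a i * y l * (\<Sum>j\<in>sv_supp x. x j * sv_br (sv_basis j) (sv_bb i l) k))"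
    by (subst sv_br_expand_left[OF fx order_refl]) simp
  also have "\<dots> = (\<Sum>i\<in>sv_supp a. \<Sum>l\<in>sv_supp y. \<Sum>j\<in>sv_supp x. a i * (x j * y l * sv_br (sv_basis j) (sv_bb i l) k))"
    by (simp add: sum_distrib_left mult_ac)
  also have "\<dots> = (\<Sum>l\<in>sv_supp y. \<Sum>j\<in>sv_supp x. \<Sum>i\<in>sv_supp a. a i * (x j * y l * sv_br (sv_basis j) (sv_bb i l) k))"
    by (rule sum_rotate3)
  also have "\<dots> = (\<Sum>j\<in>sv_supp x. \<Sum>l\<in>sv_supp y. \<Sum>i\<in>sv_supp a. a i * (x j * y l * sv_br (sv_basis j) (sv_bb i l) k))"
    by (rule sum.swap)
  finally show ?thesis .
qed

lemma sv_hom_par: "sv_hom p x \<Longrightarrow> i \<in> sv_supp x \<Longrightarrow> sv_par i = p"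
  by (simp add: sv_hom_def sv_supp_def)

lemma sv_super_jacobi:
  assumes "sv_hom p a" "sv_hom q x" "y \<in> sv_carrier"
  shows "sv_br a (sv_br x y) = (\<lambda>k. sv_br (sv_br a x) y k + sv_sign p q * sv_br x (sv_br a y) k)"
proof
  fix k
  have ac: "a \<in> sv_carrier" "x \<in> sv_carrier" using assms by (auto simp: sv_hom_def)
  have "sv_br a (sv_br x y) k = (\<Sum>j\<in>sv_supp x. \<Sum>l\<in>sv_supp y. \<Sum>i\<in>sv_supp a. a i * (x j * y l * sv_br (sv_basis i) (sv_bb j l) k))"
    by (rule sv_br_br_expand[OF ac assms(3)])
  also have "\<dots> = (\<Sum>j\<in>sv_supp x. \<Sum>l\<in>sv_supp y. \<Sum>i\<in>sv_supp a. a i * (x j * y l * sv_br (sv_bb i j) (sv_basis l) k)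
       + sv_sign p q * (a i * (x j * y l * sv_br (sv_basis j) (sv_bb i l) k)))"
    apply (intro sum.cong refl)
    apply (subst sv_jacobi_basis)
    using sv_hom_par[OF assms(1)] sv_hom_par[OF assms(2)] by (simp add: algebra_simps)
  also have "\<dots> = sv_br (sv_br a x) y k + sv_sign p q * sv_br x (sv_br a y) k"
    by (simp add: sv_br_br_left_expand[OF ac assms(3)] sv_br_br_swap_expand[OF ac assms(3)] sum.distrib sum_distrib_left)
  finally show "sv_br a (sv_br x y) k = sv_br (sv_br a x) y k + sv_sign p q * sv_br x (sv_br a y) k" .
qed

lemma sv_hom_br:
  assumes "sv_hom p a" "sv_hom q x"
  shows "sv_hom (p \<noteq> q) (sv_br a x)"
proof -
  have ac: "a \<in> sv_carrier" "x \<in> sv_carrier" using assms by (auto simp: sv_hom_def)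
  have "sv_par k = (p \<noteq> q)" if k: "sv_br a x k \<noteq> 0" for k
  proof -
    have "\<exists>i\<in>sv_supp a. \<exists>j\<in>sv_supp x. sv_bb i j k \<noteq> 0"
    proof (rule ccontr)
      assume "\<not> ?thesis"
      then have "sv_br a x k = 0" unfolding sv_br_eq_supp_sum[OF ac] by (auto intro!: sum.neutral)
      with k show False by simp
    qed
    then obtain i j where ij: "i \<in> sv_supp a" "j \<in> sv_supp x" "sv_bb i j k \<noteq> 0" by blast
    have "sv_par i = p" "sv_par j = q"
      using sv_hom_par[OF assms(1) ij(1)] sv_hom_par[OF assms(2) ij(2)] .
    then show ?thesis using sv_bb_par[OF ij(3)] by simp
  qed
  then show ?thesis using sv_br_carrier by (simp add: sv_hom_def)
qed

lemma sv_derivation_ad: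
  assumes "sv_hom p a"
  shows "sv_derivation p (sv_br a)"
  unfolding sv_derivation_def
proof (intro conjI allI impI)
  show "sv_linear (sv_br a)" by (rule sv_linear_br)
  show "sv_hom (p \<noteq> q) (sv_br a x)" if "sv_hom q x" for q x using sv_hom_br[OF assms that] .
  show "sv_br a (sv_br x y) = (\<lambda>k. sv_br (sv_br a x) y k + (if p \<and> q then - 1 else 1) * sv_br x (sv_br a y) k)"
    if "sv_hom q x" "sv_hom r y" for q r x y
    using sv_super_jacobi[OF assms that(1)] that(2) by (simp add: sv_hom_def sv_sign_def)
qed

lemma sv_Der_ad:
  assumes "a \<in> sv_carrier"
  shows "sv_Der (sv_br a)"
proof -
  define a0 where "a0 = (\<lambda>i. if sv_par i then 0 else a i)"
  define a1 where "a1 = (\<lambda>i. if sv_par i then a i else 0)"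
  have s0: "sv_supp a0 \<subseteq> sv_supp a" and s1: "sv_supp a1 \<subseteq> sv_supp a" by (auto simp: a0_def a1_def sv_supp_def)
  have c0: "a0 \<in> sv_carrier" and c1: "a1 \<in> sv_carrier"
    using s0 s1 assms by (meson sv_carrier_iff finite_subset)+
  have h0: "sv_hom False a0" using c0 by (auto simp: sv_hom_def a0_def)
  have h1: "sv_hom True a1" using c1 by (auto simp: sv_hom_def a1_def)
  have "a = (\<lambda>k. a0 k + a1 k)" by (auto simp: a0_def a1_def)
  then have "sv_br a x = (\<lambda>k. sv_br a0 x k + sv_br a1 x k)" for x
    using sv_br_add_left[OF c0 c1] by metis
  then show ?thesis unfolding sv_Der_def using sv_derivation_ad[OF h0] sv_derivation_ad[OF h1] by blast
qed

section \<open>Every derivation is inner\<close>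

lemma sv_hom_basis: "sv_hom (sv_par j) (sv_basis j)"
  using sv_basis_carrier[of j] unfolding sv_hom_def sv_basis_def by auto

lemma sv_derivation_linear: "sv_derivation p D \<Longrightarrow> sv_linear D"
  by (simp add: sv_derivation_def)

lemma sv_derivation_hom: "sv_derivation p D \<Longrightarrow> sv_hom q x \<Longrightarrow> sv_hom (p \<noteq> q) (D x)"
  unfolding sv_derivation_def by blast

lemma sv_derivation_basis_carrier: "sv_derivation p D \<Longrightarrow> D (sv_basis j) \<in> sv_carrier"
  using sv_derivation_hom[OF _ sv_hom_basis[of j]] unfolding sv_hom_def by blast

lemma sv_derivation_basis_par: "sv_derivation p D \<Longrightarrow> D (sv_basis j) i \<noteq> 0 \<Longrightarrow> sv_par i = (p \<noteq> sv_par j)"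
  using sv_derivation_hom[OF _ sv_hom_basis[of j]] unfolding sv_hom_def by blast

lemma sv_linear_basis_comb:
  assumes "sv_linear D" "finite S"
  shows "D (\<lambda>k. \<Sum>h\<in>S. c h * sv_basis h k) = (\<lambda>k. \<Sum>h\<in>S. c h * D (sv_basis h) k)"
proof -
  have "D (\<lambda>k. \<Sum>h\<in>S. c h * sv_basis h k) = (\<lambda>k. \<Sum>h\<in>S. D (\<lambda>k. c h * sv_basis h k) k)"
    by (rule sv_linear_sum[OF assms]) (simp add: sv_carrier_scale)
  also have "\<dots> = (\<lambda>k. \<Sum>h\<in>S. c h * D (sv_basis h) k)"
    using assms(1) unfolding sv_linear_def by simp
  finally show ?thesis .
qed

lemma sv_bb_expansion: "sv_bb f g = (\<lambda>k. \<Sum>h\<in>{Lb (sv_wt f + sv_wt g), Gb (sv_wt f + sv_wt g), Cb}. sv_bb f g h * sv_basis h k)"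
  by (rule sv_basis_expansion) (use sv_bb_supp in \<open>auto simp: sv_supp_def\<close>)

lemma sv_derivation_basis_leibniz:
  assumes D: "sv_derivation p D"
  shows "(\<Sum>h\<in>{Lb (sv_wt f + sv_wt g), Gb (sv_wt f + sv_wt g), Cb}. sv_bb f g h * D (sv_basis h) i)
     = sv_br (D (sv_basis f)) (sv_basis g) i + sv_sign p (sv_par f) * sv_br (sv_basis f) (D (sv_basis g)) i"
proof -
  have "D (sv_br (sv_basis f) (sv_basis g)) = (\<lambda>k. sv_br (D (sv_basis f)) (sv_basis g) k + (if p \<and> sv_par f then -1 else 1) * sv_br (sv_basis f) (D (sv_basis g)) k)"
    using D sv_hom_basis[of f] sv_hom_basis[of g] unfolding sv_derivation_def by blast
  moreover have "D (sv_br (sv_basis f) (sv_basis g)) = (\<lambda>k. \<Sum>h\<in>{Lb (sv_wt f + sv_wt g), Gb (sv_wt f + sv_wt g), Cb}. sv_bb f g h * D (sv_basis h) k)"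
    by (subst sv_br_basis, subst sv_bb_expansion, rule sv_linear_basis_comb[OF sv_derivation_linear[OF D]]) simp
  ultimately show ?thesis by (simp add: sv_sign_def fun_eq_iff)
qed

lemma sv_bb_L0: "sv_bb (Lb 0) g = (\<lambda>k. - of_int (sv_wt g) * sv_basis g k)"
  by (cases g) (auto simp: sv_basis_def fun_eq_iff)

lemma sv_br_L0_left: "y \<in> sv_carrier \<Longrightarrow> sv_br (sv_basis (Lb 0)) y i = - of_int (sv_wt i) * y i"
  by (cases i) (simp_all add: sv_br_basis_coeffs)

lemma sv_derivation_L0_eq:
  assumes D: "sv_derivation p D"
  shows "of_int (sv_wt i - sv_wt g) * D (sv_basis g) i = sv_br (D (sv_basis (Lb 0))) (sv_basis g) i"
proof -
  have L: "sv_linear D" using sv_derivation_linear[OF D] .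
  have "D (sv_br (sv_basis (Lb 0)) (sv_basis g)) = (\<lambda>k. sv_br (D (sv_basis (Lb 0))) (sv_basis g) k + (if p \<and> sv_par (Lb 0) then -1 else 1) * sv_br (sv_basis (Lb 0)) (D (sv_basis g)) k)"
    using D sv_hom_basis[of "Lb 0"] sv_hom_basis[of g] unfolding sv_derivation_def by blast
  moreover have "D (sv_br (sv_basis (Lb 0)) (sv_basis g)) = (\<lambda>k. - of_int (sv_wt g) * D (sv_basis g) k)"
    using L sv_basis_carrier unfolding sv_br_basis sv_bb_L0 sv_linear_def by blast
  ultimately have "- of_int (sv_wt g) * D (sv_basis g) i = sv_br (D (sv_basis (Lb 0))) (sv_basis g) i - of_int (sv_wt i) * D (sv_basis g) i"
    using sv_br_L0_left[OF sv_derivation_basis_carrier[OF D]] by (simp add: fun_eq_iff)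
  then show ?thesis by (simp add: algebra_simps)
qed

definition wt_divide :: "(sv_idx \<Rightarrow> complex) \<Rightarrow> sv_idx \<Rightarrow> complex" where
  "wt_divide u = (\<lambda>i. if sv_wt i = 0 then 0 else u i / of_int (sv_wt i))"

lemma wt_divide_supp: "sv_supp (wt_divide u) \<subseteq> sv_supp u"
  by (auto simp: wt_divide_def sv_supp_def)

lemma wt_divide_carrier: "u \<in> sv_carrier \<Longrightarrow> wt_divide u \<in> sv_carrier"
  by (meson wt_divide_supp sv_carrier_iff finite_subset)

lemma wt_divide_br_off_diagonal:
  assumes "u \<in> sv_carrier" and "sv_wt i \<noteq> sv_wt g"
  shows "sv_br (wt_divide u) (sv_basis g) i = sv_br u (sv_basis g) i / of_int (sv_wt i - sv_wt g)"
  unfolding sv_br_basis_right[OF assms(1)] sv_br_basis_right[OF wt_divide_carrier[OF assms(1)]]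
  using assms(2) by (simp add: wt_divide_def)

lemma wt_divide_br_diagonal:
  assumes "u \<in> sv_carrier" and "sv_wt i = sv_wt g"
  shows "sv_br (wt_divide u) (sv_basis g) i = 0"
  unfolding sv_br_basis_right[OF wt_divide_carrier[OF assms(1)]]
  using assms(2) by (simp add: wt_divide_def)

lemma sv_derivation_off_diagonal:
  assumes D: "sv_derivation p D" and ne: "sv_wt i \<noteq> sv_wt g"
  shows "D (sv_basis g) i = sv_br (wt_divide (D (sv_basis (Lb 0)))) (sv_basis g) i"
proof -
  have h1: "of_int (sv_wt i - sv_wt g) * D (sv_basis g) i = sv_br (D (sv_basis (Lb 0))) (sv_basis g) i"
    by (rule sv_derivation_L0_eq[OF D])
  have h2: "sv_br (wt_divide (D (sv_basis (Lb 0)))) (sv_basis g) i = sv_br (D (sv_basis (Lb 0))) (sv_basis g) i / of_int (sv_wt i - sv_wt g)"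
    by (rule wt_divide_br_off_diagonal[OF sv_derivation_basis_carrier[OF D] ne])
  have nz: "(of_int (sv_wt i - sv_wt g) :: complex) \<noteq> 0" using ne by simp
  show ?thesis unfolding h2 h1[symmetric] using nz by simp
qed

definition zero_mode :: "complex \<Rightarrow> complex \<Rightarrow> sv_idx \<Rightarrow> complex" where
  "zero_mode l m = (\<lambda>k. l * sv_basis (Lb 0) k + m * sv_basis (Gb 0) k)"

lemma zero_mode_carrier: "zero_mode l m \<in> sv_carrier"
  unfolding zero_mode_def by (intro sv_carrier_add sv_carrier_scale sv_basis_carrier)

lemma zero_mode_simps[simp]: "zero_mode l m (Lb n) = (if n = 0 then l else 0)" "zero_mode l m (Gb n) = (if n = 0 then m else 0)" "zero_mode l m Cb = 0"
  by (auto simp: zero_mode_def sv_basis_def)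

lemma zero_mode_off_zero: "sv_wt i \<noteq> 0 \<Longrightarrow> zero_mode l m i = 0"
  by (cases i) auto

lemma zero_mode_br_off_diagonal:
  assumes "sv_wt i \<noteq> sv_wt g"
  shows "sv_br (zero_mode l m) (sv_basis g) i = 0"
  using assms by (simp add: sv_br_basis_right zero_mode_carrier zero_mode_off_zero)

lemma int_arith_prog:
  fixes f :: "int \<Rightarrow> complex"
  assumes "\<And>r. f r - f (r - 1) = d"
  shows "f r = f 0 + of_int r * d"
proof -
  have pos: "f (int n) = f 0 + of_nat n * d" for n
  proof (induction n)
    case (Suc n)
    have "f (int (Suc n)) = f (int n) + d" using assms[of "int (Suc n)"] by (simp add: algebra_simps)
    then show ?case using Suc by (simp add: algebra_simps)
  qed simp
  have neg: "f (- int n) = f 0 - of_nat n * d" for n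
  proof (induction n)
    case (Suc n)
    have e: "- int (Suc n) = - int n - 1" by simp
    have "f (- int n) - f (- int (Suc n)) = d" using assms[of "- int n"] unfolding e .
    then show ?case using Suc by (simp add: algebra_simps)
  qed simp
  show ?thesis
  proof (cases "r \<ge> 0")
    case True then show ?thesis using pos[of "nat r"] by simp
  next
    case False then show ?thesis using neg[of "nat (- r)"] by simp
  qed
qed

lemma even_diagonal_scalars:
  fixes \<alpha> \<beta> :: "int \<Rightarrow> complex"
  assumes GG: "\<And>r s. r + s \<noteq> 0 \<Longrightarrow> \<alpha> (r + s) = \<beta> r + \<beta> s"
    and LG: "\<And>m r. (of_int m / 2 - of_int r) * (\<beta> (m + r) - \<alpha> m - \<beta> r) = 0"
    and LL: "\<alpha> 0 = \<alpha> 1 + \<alpha> (-1)"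
  shows "\<alpha> n = of_int n * (\<alpha> 2 - \<alpha> 1)" and "\<beta> n = of_int n * (\<alpha> 2 - \<alpha> 1)"
proof -
  define \<delta> where "\<delta> = \<alpha> 2 - \<alpha> 1"
  have step: "\<beta> r - \<beta> (r - 1) = \<delta>" for r
  proof -
    have "\<alpha> 1 = \<beta> r + \<beta> (1 - r)" using GG[of r "1 - r"] by simp
    moreover have "\<alpha> 2 = \<beta> r + \<beta> (2 - r)" using GG[of r "2 - r"] by simp
    moreover have "\<alpha> 1 = \<beta> (r - 1) + \<beta> (2 - r)" using GG[of "r - 1" "2 - r"] by simp
    ultimately show ?thesis unfolding \<delta>_def by (simp add: algebra_simps)
  qed
  have \<beta>: "\<beta> r = \<beta> 0 + of_int r * \<delta>" for r by (rule int_arith_prog[of \<beta> \<delta>, OF step])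
  have \<alpha>: "\<alpha> n = \<beta> 0 + \<beta> n" if "n \<noteq> 0" for n using GG[of 0 n] that by simp
  have \<beta>0: "\<beta> 0 = 0"
    using LG[of 1 0] \<alpha>[of 1] \<beta>[of 1] by simp
  have "\<beta> n = of_int n * \<delta>" using \<beta>[of n] \<beta>0 by simp
  then show "\<beta> n = of_int n * (\<alpha> 2 - \<alpha> 1)" unfolding \<delta>_def .
  have "\<alpha> n = of_int n * \<delta>"
  proof (cases "n = 0")
    case True
    then show ?thesis using LL \<alpha>[of 1] \<alpha>[of "-1"] \<beta>[of 1] \<beta>[of "-1"] \<beta>0 by simp
  next
    case False then show ?thesis using \<alpha>[of n] \<beta>[of n] \<beta>0 by simp
  qed
  then show "\<alpha> n = of_int n * (\<alpha> 2 - \<alpha> 1)" unfolding \<delta>_def .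
qed

lemma sv_derivation_even_diagonal:
  assumes D: "sv_derivation False D"
  shows "\<exists>l. \<forall>g i. sv_wt i = sv_wt g \<longrightarrow> D (sv_basis g) i = sv_br (zero_mode l 0) (sv_basis g) i"
proof -
  note dc = sv_derivation_basis_carrier[OF D]
  note leibniz = sv_derivation_basis_leibniz[OF D]
  define \<alpha> where "\<alpha> m = D (sv_basis (Lb m)) (Lb m)" for m
  define \<beta> where "\<beta> r = D (sv_basis (Gb r)) (Gb r)" for r
  have par1: "D (sv_basis (Lb m)) (Gb n) = 0" for m n using sv_derivation_basis_par[OF D, of "Lb m" "Gb n"] by auto
  have par2: "D (sv_basis (Gb m)) (Lb n) = 0" for m n using sv_derivation_basis_par[OF D, of "Gb m" "Lb n"] by auto
  have par3: "D (sv_basis (Gb m)) Cb = 0" for m using sv_derivation_basis_par[OF D, of "Gb m" "Cb"] by auto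
  have par4: "D (sv_basis Cb) (Gb n) = 0" for n using sv_derivation_basis_par[OF D, of "Cb" "Gb n"] by auto
  have GG: "\<alpha> (r + s) = \<beta> r + \<beta> s" if "r + s \<noteq> 0" for r s
  proof -
    have "2 * \<alpha> (r + s) = 2 * (\<beta> r + \<beta> s)"
      using leibniz[of "Gb r" "Gb s" "Lb (r + s)"] that by (simp add: sv_br_basis_coeffs dc sv_sign_def \<alpha>_def \<beta>_def)
    then show ?thesis by (metis mult_cancel_left zero_neq_numeral)
  qed
  have LG: "(of_int m / 2 - of_int r) * (\<beta> (m + r) - \<alpha> m - \<beta> r) = 0" for m r
    using leibniz[of "Lb m" "Gb r" "Gb (m + r)"] by (simp add: sv_br_basis_coeffs dc sv_sign_def \<alpha>_def \<beta>_def algebra_simps)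
  have "2 * \<alpha> 0 = \<alpha> 1 * 2 + \<alpha> (-1) * 2"
    using leibniz[of "Lb 1" "Lb (-1)" "Lb 0"] by (simp add: sv_br_basis_coeffs dc sv_sign_def \<alpha>_def)
  then have LL: "\<alpha> 0 = \<alpha> 1 + \<alpha> (-1)" by algebra
  have L0C: "D (sv_basis (Lb 0)) Cb = 0"
    using leibniz[of "Lb 1" "Lb (-1)" "Cb"] by (simp add: sv_br_basis_coeffs dc sv_sign_def \<alpha>_def)
  have CL0: "4 * \<alpha> 0 + D (sv_basis Cb) (Lb 0) / 2 = 4 * \<alpha> 2 + 4 * \<alpha> (-2)"
    using leibniz[of "Lb 2" "Lb (-2)" "Lb 0"] by (simp add: sv_br_basis_coeffs dc sv_sign_def \<alpha>_def)
  have CC: "4 * D (sv_basis (Lb 0)) Cb + D (sv_basis Cb) Cb / 2 = \<alpha> 2 / 2 + \<alpha> (-2) / 2"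
    using leibniz[of "Lb 2" "Lb (-2)" "Cb"] by (simp add: sv_br_basis_coeffs dc sv_sign_def \<alpha>_def)
  define \<delta> where "\<delta> = \<alpha> 2 - \<alpha> 1"
  note scalars = even_diagonal_scalars[OF GG LG LL, folded \<delta>_def]
  have C1: "D (sv_basis Cb) (Lb 0) = 0" using CL0 scalars(1)[of 0] scalars(1)[of 2] scalars(1)[of "-2"] by simp
  have C2: "D (sv_basis Cb) Cb = 0" using CC L0C scalars(1)[of 2] scalars(1)[of "-2"] by simp
  show ?thesis
  proof (intro exI allI impI)
    fix g i assume w: "sv_wt i = sv_wt g"
    show "D (sv_basis g) i = sv_br (zero_mode (- \<delta>) 0) (sv_basis g) i"
    proof (cases g)
      case (Lb m)
      then show ?thesis using w scalars(1)[of m] L0C par1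
        by (cases i) (auto simp: sv_br_basis_coeffs zero_mode_carrier \<alpha>_def)
    next
      case (Gb r)
      then show ?thesis using w scalars(2)[of r] par2 par3
        by (cases i) (auto simp: sv_br_basis_coeffs zero_mode_carrier \<beta>_def)
    next
      case Cb
      then show ?thesis using w C1 C2 par4
        by (cases i) (auto simp: sv_br_basis_coeffs zero_mode_carrier)
    qed
  qed
qed

lemma odd_diagonal_scalars:
  fixes \<alpha> \<beta> :: "int \<Rightarrow> complex"
  assumes LG: "\<And>m r. (of_int m / 2 - of_int r) * \<beta> (m + r) = 2 * \<alpha> m + (of_int m - of_int r) * \<beta> r"
  shows "\<beta> n = \<beta> 0" and "\<alpha> n = - of_int n * \<beta> 0 / 4"
proof -
  have r0: "(of_int m / 2) * \<beta> m = 2 * \<alpha> m + of_int m * \<beta> 0" for m using LG[of m 0] by simp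
  have rm: "(3 * of_int m / 2) * \<beta> 0 = 2 * \<alpha> m + 2 * of_int m * \<beta> (- m)" for m
    using LG[of m "- m"] by (simp add: algebra_simps)
  have e5: "5 * \<beta> 0 = \<beta> m + 4 * \<beta> (- m)" if "m \<noteq> 0" for m
  proof -
    have "of_int m * (5 * \<beta> 0 - \<beta> m - 4 * \<beta> (- m)) = 0"
      using r0[of m] rm[of m] by algebra
    then have "5 * \<beta> 0 - \<beta> m - 4 * \<beta> (- m) = 0" using that by simp
    then show ?thesis by algebra
  qed
  show \<beta>: "\<beta> n = \<beta> 0" for n
  proof (cases "n = 0")
    case False
    then show ?thesis using e5[of n] e5[of "- n"] by simp
  qed simp
  show "\<alpha> n = - of_int n * \<beta> 0 / 4"
    using r0[of n] \<beta>[of n] by algebra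
qed

lemma sv_derivation_odd_diagonal:
  assumes D: "sv_derivation True D"
  shows "\<exists>m. \<forall>g i. sv_wt i = sv_wt g \<longrightarrow> D (sv_basis g) i = sv_br (zero_mode 0 m) (sv_basis g) i"
proof -
  note dc = sv_derivation_basis_carrier[OF D]
  note leibniz = sv_derivation_basis_leibniz[OF D]
  define \<alpha> where "\<alpha> m = D (sv_basis (Lb m)) (Gb m)" for m
  define \<beta> where "\<beta> r = D (sv_basis (Gb r)) (Lb r)" for r
  have par1: "D (sv_basis (Lb m)) (Lb n) = 0" for m n using sv_derivation_basis_par[OF D, of "Lb m" "Lb n"] by auto
  have par1c: "D (sv_basis (Lb m)) Cb = 0" for m using sv_derivation_basis_par[OF D, of "Lb m" "Cb"] by auto
  have par2: "D (sv_basis (Gb m)) (Gb n) = 0" for m n using sv_derivation_basis_par[OF D, of "Gb m" "Gb n"] by auto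
  have par4: "D (sv_basis Cb) (Lb n) = 0" for n using sv_derivation_basis_par[OF D, of "Cb" "Lb n"] by auto
  have par4c: "D (sv_basis Cb) Cb = 0" using sv_derivation_basis_par[OF D, of "Cb" "Cb"] by auto
  have LG: "(of_int m / 2 - of_int r) * \<beta> (m + r) = 2 * \<alpha> m + (of_int m - of_int r) * \<beta> r" for m r
    using leibniz[of "Lb m" "Gb r" "Lb (m + r)"] by (simp add: sv_br_basis_coeffs dc sv_sign_def \<alpha>_def \<beta>_def algebra_simps)
  have LC: "3 / 2 * D (sv_basis (Gb 0)) Cb = \<alpha> 1 / 4"
    using leibniz[of "Lb 1" "Gb (-1)" "Cb"] by (simp add: sv_br_basis_coeffs dc sv_sign_def \<alpha>_def \<beta>_def)
  have GG0: "2 * \<alpha> 0 - D (sv_basis Cb) (Gb 0) / 12 = 0"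
    using leibniz[of "Gb 0" "Gb 0" "Gb 0"] by (simp add: sv_br_basis_coeffs dc sv_sign_def \<alpha>_def \<beta>_def)
  define \<mu> where "\<mu> = \<beta> 0 / 2"
  note scalars = odd_diagonal_scalars[OF LG]
  have al: "\<alpha> m = \<mu> * (of_int m * 3 / 2 - of_int m * 2)" for m
    using scalars(2)[of m] unfolding \<mu>_def by algebra
  have be: "\<beta> m = 2 * \<mu>" for m using scalars(1)[of m] unfolding \<mu>_def by simp
  have "\<alpha> 1 = - \<mu> / 2" using al[of 1] by simp
  then have G0C: "D (sv_basis (Gb 0)) Cb = \<mu> * (- 1 / 12)" using LC by algebra
  have CG0: "D (sv_basis Cb) (Gb 0) = 0" using GG0 al[of 0] by simp
  show ?thesis
  proof (intro exI allI impI)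
    fix g i assume w: "sv_wt i = sv_wt g"
    show "D (sv_basis g) i = sv_br (zero_mode 0 \<mu>) (sv_basis g) i"
    proof (cases g)
      case (Lb m)
      then show ?thesis using w al[of m] par1 par1c
        by (cases i) (auto simp: sv_br_basis_coeffs zero_mode_carrier \<alpha>_def)
    next
      case (Gb r)
      then show ?thesis using w be[of r] par2 G0C
        by (cases i) (auto simp: sv_br_basis_coeffs zero_mode_carrier \<beta>_def)
    next
      case Cb
      then show ?thesis using w CG0 par4 par4c
        by (cases i) (auto simp: sv_br_basis_coeffs zero_mode_carrier)
    qed
  qed
qed

lemma sv_derivation_diagonal:
  assumes "sv_derivation p D"
  shows "\<exists>l m. \<forall>g i. sv_wt i = sv_wt g \<longrightarrow> D (sv_basis g) i = sv_br (zero_mode l m) (sv_basis g) i"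
proof (cases p)
  case True
  with assms have "sv_derivation True D" by simp
  then obtain m where "\<forall>g i. sv_wt i = sv_wt g \<longrightarrow> D (sv_basis g) i = sv_br (zero_mode 0 m) (sv_basis g) i"
    using sv_derivation_odd_diagonal by blast
  then show ?thesis by blast
next
  case False
  with assms have "sv_derivation False D" by simp
  then obtain l where "\<forall>g i. sv_wt i = sv_wt g \<longrightarrow> D (sv_basis g) i = sv_br (zero_mode l 0) (sv_basis g) i"
    using sv_derivation_even_diagonal by blast
  then show ?thesis by blast
qed

definition sv_inner :: "((sv_idx \<Rightarrow> complex) \<Rightarrow> (sv_idx \<Rightarrow> complex)) \<Rightarrow> bool" where
  "sv_inner D \<longleftrightarrow> (\<exists>a\<in>sv_carrier. \<forall>x\<in>sv_carrier. D x = sv_br a x)"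

lemma sv_derivation_inner:
  assumes D: "sv_derivation p D"
  shows "sv_inner D"
proof -
  obtain l m where lm: "\<And>g i. sv_wt i = sv_wt g \<Longrightarrow> D (sv_basis g) i = sv_br (zero_mode l m) (sv_basis g) i"
    using sv_derivation_diagonal[OF D] by blast
  define b where "b = wt_divide (D (sv_basis (Lb 0)))"
  have bc: "b \<in> sv_carrier" unfolding b_def by (rule wt_divide_carrier[OF sv_derivation_basis_carrier[OF D]])
  define a where "a = (\<lambda>k. b k + zero_mode l m k)"
  have ac: "a \<in> sv_carrier" unfolding a_def by (rule sv_carrier_add[OF bc zero_mode_carrier])
  have basis: "D (sv_basis g) = sv_br a (sv_basis g)" for g
  proof
    fix i
    have "sv_br a (sv_basis g) i = sv_br b (sv_basis g) i + sv_br (zero_mode l m) (sv_basis g) i"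
      unfolding a_def sv_br_add_left[OF bc zero_mode_carrier] by simp
    moreover have "D (sv_basis g) i = sv_br b (sv_basis g) i + sv_br (zero_mode l m) (sv_basis g) i"
    proof (cases "sv_wt i = sv_wt g")
      case True
      then have "sv_br b (sv_basis g) i = 0" unfolding b_def by (rule wt_divide_br_diagonal[OF sv_derivation_basis_carrier[OF D]])
      then show ?thesis using lm[OF True] by simp
    next
      case False
      then have "sv_br (zero_mode l m) (sv_basis g) i = 0" by (rule zero_mode_br_off_diagonal)
      then show ?thesis using sv_derivation_off_diagonal[OF D False] unfolding b_def by simp
    qed
    ultimately show "D (sv_basis g) i = sv_br a (sv_basis g) i" by simp
  qed
  then show ?thesis
    unfolding sv_inner_def using sv_linear_eqI[OF sv_derivation_linear[OF D] sv_linear_br] ac by blast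
qed

lemma sv_Der_inner:
  assumes "sv_Der D"
  shows "sv_inner D"
proof -
  obtain D0 D1 where d: "sv_derivation False D0" "sv_derivation True D1"
    "\<And>x. x \<in> sv_carrier \<Longrightarrow> D x = (\<lambda>k. D0 x k + D1 x k)"
    using assms unfolding sv_Der_def by blast
  obtain a0 where a0: "a0 \<in> sv_carrier" "\<And>x. x \<in> sv_carrier \<Longrightarrow> D0 x = sv_br a0 x"
    using sv_derivation_inner[OF d(1)] unfolding sv_inner_def by blast
  obtain a1 where a1: "a1 \<in> sv_carrier" "\<And>x. x \<in> sv_carrier \<Longrightarrow> D1 x = sv_br a1 x"
    using sv_derivation_inner[OF d(2)] unfolding sv_inner_def by blast
  have "D x = sv_br (\<lambda>k. a0 k + a1 k) x" if x: "x \<in> sv_carrier" for x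
    unfolding sv_br_add_left[OF a0(1) a1(1)] d(3)[OF x] a0(2)[OF x] a1(2)[OF x] ..
  then show ?thesis unfolding sv_inner_def using sv_carrier_add[OF a0(1) a1(1)] by blast
qed

lemma sv_inner_Der: "sv_inner D \<Longrightarrow> sv_Der D"
  unfolding sv_inner_def using sv_Der_ad unfolding sv_Der_def by metis

section \<open>Weight components of a locally inner map\<close>

definition locally_inner :: "((sv_idx \<Rightarrow> complex) \<Rightarrow> (sv_idx \<Rightarrow> complex)) \<Rightarrow> bool" where
  "locally_inner P \<longleftrightarrow> (\<forall>x\<in>sv_carrier. \<exists>a\<in>sv_carrier. P x = sv_br a x)"

lemma two_power_int_inj:
  assumes "(2::complex) powi k = 2 powi k0"
  shows "k = k0"
proof (rule ccontr)
  assume ne: "k \<noteq> k0"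
  have e: "(2::complex) powi n = of_real ((2::real) powi n)" for n by simp
  from assms have "(2::real) powi k = 2 powi k0" unfolding e of_real_eq_iff .
  moreover have "(2::real) powi k \<noteq> 2 powi k0"
    using ne power_int_strict_increasing[of k k0 "2::real"] power_int_strict_increasing[of k0 k "2::real"]
    by (cases "k < k0") auto
  ultimately show False by simp
qed

locale fun_subspace =
  fixes V :: "('a \<Rightarrow> complex) set"
  assumes add: "\<And>u v. u \<in> V \<Longrightarrow> v \<in> V \<Longrightarrow> (\<lambda>i. u i + v i) \<in> V"
    and scl: "\<And>c u. u \<in> V \<Longrightarrow> (\<lambda>i. c * u i) \<in> V"
    and zero: "(\<lambda>i. 0) \<in> V"
begin

lemma diff_closed: "u \<in> V \<Longrightarrow> v \<in> V \<Longrightarrow> (\<lambda>i. u i - v i) \<in> V"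
  using add[of u "\<lambda>i. (-1) * v i"] scl[of v "-1"] by simp

lemma sum_closed: "finite S \<Longrightarrow> (\<And>k. k \<in> S \<Longrightarrow> u k \<in> V) \<Longrightarrow> (\<lambda>i. \<Sum>k\<in>S. u k i) \<in> V"
proof (induction S rule: finite_induct)
  case empty then show ?case using zero by simp
next
  case (insert x F)
  then show ?case using add[of "u x" "\<lambda>i. \<Sum>k\<in>F. u k i"] by simp
qed

text \<open>Subtracting \<open>2 ^ k\<^sub>0\<close> times the sum at t from the sum at \<open>2 t\<close> eliminates the \<open>k\<^sub>0\<close>-term.\<close>

lemma power_sum_eliminate:
  assumes fin: "finite K" and k0: "k0 \<notin> K" and t: "t \<noteq> 0"
    and P: "\<And>t. t \<noteq> 0 \<Longrightarrow> (\<lambda>i. \<Sum>k\<in>insert k0 K. t powi k * v k i) \<in> V"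
  shows "(\<lambda>i. \<Sum>k\<in>K. t powi k * (((2::complex) powi k - 2 powi k0) * v k i)) \<in> V"
proof -
  have P2: "(\<lambda>i. \<Sum>k\<in>insert k0 K. (2 * t) powi k * v k i) \<in> V" using t by (intro P) simp
  have P1: "(\<lambda>i. 2 powi k0 * (\<Sum>k\<in>insert k0 K. t powi k * v k i)) \<in> V" using scl P[OF t] by blast
  have "(\<Sum>k\<in>insert k0 K. (2 * t) powi k * v k i) - 2 powi k0 * (\<Sum>k\<in>insert k0 K. t powi k * v k i)
      = (\<Sum>k\<in>K. t powi k * ((2 powi k - 2 powi k0) * v k i))" for i
  proof -
    have "(\<Sum>k\<in>insert k0 K. (2 * t) powi k * v k i) - 2 powi k0 * (\<Sum>k\<in>insert k0 K. t powi k * v k i)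
        = (\<Sum>k\<in>K. (2 * t) powi k * v k i) - 2 powi k0 * (\<Sum>k\<in>K. t powi k * v k i)"
      using fin k0 by (simp add: power_int_mult_distrib algebra_simps)
    also have "\<dots> = (\<Sum>k\<in>K. t powi k * ((2 powi k - 2 powi k0) * v k i))"
      by (simp add: power_int_mult_distrib sum_distrib_left sum_subtractf[symmetric] algebra_simps)
    finally show ?thesis .
  qed
  then show ?thesis using diff_closed[OF P2 P1] by simp
qed

lemma vandermonde_closed:
  assumes "finite K"
  shows "(\<And>t. t \<noteq> 0 \<Longrightarrow> (\<lambda>i. \<Sum>k\<in>K. t powi k * v k i) \<in> V) \<Longrightarrow> k \<in> K \<Longrightarrow> v k \<in> V"
  using assms
proof (induction K arbitrary: v k rule: finite_induct)
  case empty then show ?case by simp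
next
  case (insert k0 K)
  have vk: "v k \<in> V" if kK: "k \<in> K" for k
  proof -
    define c where "c = (2::complex) powi k - 2 powi k0"
    have "c \<noteq> 0" using two_power_int_inj kK insert(2) unfolding c_def by force
    have "(\<lambda>i. c * v k i) \<in> V"
      using insert(3)[of "\<lambda>k i. ((2::complex) powi k - 2 powi k0) * v k i" k] kK
        power_sum_eliminate[OF insert(1,2) _ insert(4)] unfolding c_def by blast
    then have "(\<lambda>i. inverse c * (c * v k i)) \<in> V" by (rule scl)
    then show ?thesis using \<open>c \<noteq> 0\<close> by (simp add: field_simps)
  qed
  show ?case
  proof (cases "k = k0")
    case False then show ?thesis using vk insert(5) by simp
  next
    case True
    have P: "(\<lambda>i. \<Sum>k\<in>insert k0 K. 1 powi k * v k i) \<in> V" using insert(4)[of 1] by simp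
    have S: "(\<lambda>i. \<Sum>k\<in>K. v k i) \<in> V" using sum_closed[OF insert(1)] vk by blast
    have "v k0 = (\<lambda>i. (\<Sum>k\<in>insert k0 K. 1 powi k * v k i) - (\<Sum>k\<in>K. v k i))"
      using insert(1,2) by (simp add: fun_eq_iff)
    then show ?thesis using diff_closed[OF P S] True by simp
  qed
qed

end

definition br_space :: "(sv_idx \<Rightarrow> complex) \<Rightarrow> (sv_idx \<Rightarrow> complex) set" where
  "br_space x = {sv_br a x | a. a \<in> sv_carrier}"

lemma fun_subspace_br_space: "fun_subspace (br_space x)"
proof
  fix u v assume "u \<in> br_space x" "v \<in> br_space x"
  then obtain a b where ab: "a \<in> sv_carrier" "b \<in> sv_carrier" "u = sv_br a x" "v = sv_br b x"
    by (auto simp: br_space_def)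
  have "(\<lambda>i. u i + v i) = sv_br (\<lambda>k. a k + b k) x"
    using ab sv_br_add_left[OF ab(1,2)] by simp
  then show "(\<lambda>i. u i + v i) \<in> br_space x"
    unfolding br_space_def using sv_carrier_add[OF ab(1,2)] by blast
next
  fix c u assume "u \<in> br_space x"
  then obtain a where ab: "a \<in> sv_carrier" "u = sv_br a x" by (auto simp: br_space_def)
  have "(\<lambda>i. c * u i) = sv_br (\<lambda>k. c * a k) x"
    using ab sv_br_scale_left[of c a x] by simp
  then show "(\<lambda>i. c * u i) \<in> br_space x"
    unfolding br_space_def using sv_carrier_scale[OF ab(1)] by blast
next
  have "sv_br (\<lambda>k. 0) x = (\<lambda>i. 0)" by (simp add: sv_br_def)
  then show "(\<lambda>i. 0) \<in> br_space x" unfolding br_space_def mem_Collect_eq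
    by (intro exI[where x="\<lambda>k. 0"] conjI) simp_all
qed

definition grading_aut :: "complex \<Rightarrow> (sv_idx \<Rightarrow> complex) \<Rightarrow> sv_idx \<Rightarrow> complex" where
  "grading_aut t x = (\<lambda>i. t powi sv_wt i * x i)"

lemma grading_aut_supp: "sv_supp (grading_aut t x) \<subseteq> sv_supp x" by (auto simp: grading_aut_def sv_supp_def)

lemma grading_aut_carrier: "x \<in> sv_carrier \<Longrightarrow> grading_aut t x \<in> sv_carrier"
  by (meson grading_aut_supp sv_carrier_iff finite_subset)

lemma grading_aut_inverse: "t \<noteq> 0 \<Longrightarrow> grading_aut t (grading_aut (1 / t) x) = x"
  by (simp add: grading_aut_def fun_eq_iff power_int_divide_distrib)

lemma grading_aut_br:
  assumes t: "t \<noteq> 0" and a: "a \<in> sv_carrier" and x: "x \<in> sv_carrier"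
  shows "sv_br (grading_aut t a) (grading_aut t x) = grading_aut t (sv_br a x)"
proof
  fix k
  have fa: "finite (sv_supp a)" and fx: "finite (sv_supp x)" using a x sv_carrier_iff by auto
  have "sv_br (grading_aut t a) (grading_aut t x) k = (\<Sum>i\<in>sv_supp a. \<Sum>j\<in>sv_supp x. grading_aut t a i * grading_aut t x j * sv_bb i j k)"
    by (rule sv_br_eq_sum[OF fa fx grading_aut_supp grading_aut_supp])
  also have "\<dots> = (\<Sum>i\<in>sv_supp a. \<Sum>j\<in>sv_supp x. t powi sv_wt k * (a i * x j * sv_bb i j k))"
  proof (intro sum.cong refl)
    fix i j
    show "grading_aut t a i * grading_aut t x j * sv_bb i j k = t powi sv_wt k * (a i * x j * sv_bb i j k)"
    proof (cases "sv_bb i j k = 0")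
      case False
      then have "sv_wt k = sv_wt i + sv_wt j" by (rule sv_bb_wt)
      then show ?thesis using t by (simp add: grading_aut_def power_int_add algebra_simps)
    qed simp
  qed
  also have "\<dots> = grading_aut t (sv_br a x) k"
    by (simp add: grading_aut_def sv_br_eq_sum[OF fa fx order_refl order_refl] sum_distrib_left)
  finally show "sv_br (grading_aut t a) (grading_aut t x) k = grading_aut t (sv_br a x) k" .
qed

definition wt_part :: "int \<Rightarrow> (sv_idx \<Rightarrow> complex) \<Rightarrow> int \<Rightarrow> sv_idx \<Rightarrow> complex" where
  "wt_part k y w = (\<lambda>i. if sv_wt i = w + k then y i else 0)"

lemma sum_power_int_wt_part:
  assumes "finite K" "y i \<noteq> 0 \<Longrightarrow> sv_wt i - w \<in> K"
  shows "(\<Sum>k\<in>K. t powi k * wt_part k y w i) = t powi (sv_wt i - w) * y i"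
proof -
  have "(\<Sum>k\<in>K. t powi k * wt_part k y w i) = (\<Sum>k\<in>K. if k = sv_wt i - w then t powi k * y i else 0)"
    by (intro sum.cong refl) (auto simp: wt_part_def)
  also have "\<dots> = t powi (sv_wt i - w) * y i"
    using assms by (auto simp: sum.delta')
  finally show ?thesis .
qed

lemma wt_part_eq_zero: "(\<And>i. y i \<noteq> 0 \<Longrightarrow> sv_wt i - w \<noteq> k) \<Longrightarrow> wt_part k y w = (\<lambda>i. 0)"
  by (fastforce simp: wt_part_def fun_eq_iff)

lemma wt_part_pair_in_br_space:
  assumes lin: "sv_linear Psi" and loc: "locally_inner Psi"
  shows "(\<lambda>i. wt_part k (Psi (sv_basis f)) (sv_wt f) i + wt_part k (Psi (sv_basis F)) (sv_wt F) i)
    \<in> br_space (\<lambda>i. sv_basis f i + sv_basis F i)"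
proof -
  let ?x = "\<lambda>i. sv_basis f i + sv_basis F i"
  let ?yf = "Psi (sv_basis f)" and ?yF = "Psi (sv_basis F)"
  interpret fun_subspace "br_space ?x" by (rule fun_subspace_br_space)
  define v where "v k = (\<lambda>i. wt_part k ?yf (sv_wt f) i + wt_part k ?yF (sv_wt F) i)" for k
  define K where "K = (\<lambda>i. sv_wt i - sv_wt f) ` sv_supp ?yf \<union> (\<lambda>i. sv_wt i - sv_wt F) ` sv_supp ?yF"
  have "?yf \<in> sv_carrier" "?yF \<in> sv_carrier" using lin sv_basis_carrier unfolding sv_linear_def by blast+
  then have fK: "finite K" unfolding K_def sv_carrier_iff by auto
  have inK: "?yf i \<noteq> 0 \<Longrightarrow> sv_wt i - sv_wt f \<in> K" "?yF i \<noteq> 0 \<Longrightarrow> sv_wt i - sv_wt F \<in> K" for i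
    by (auto simp: K_def sv_supp_def)
  have conj: "(\<lambda>i. \<Sum>k\<in>K. t powi k * v k i) \<in> br_space ?x" if t: "t \<noteq> 0" for t
  proof -
    have xc: "?x \<in> sv_carrier" by (intro sv_carrier_add sv_basis_carrier)
    have px: "grading_aut (1 / t) ?x = (\<lambda>i. (1 / t) powi sv_wt f * sv_basis f i + (1 / t) powi sv_wt F * sv_basis F i)"
      by (auto simp: grading_aut_def sv_basis_def fun_eq_iff)
    obtain c where c: "c \<in> sv_carrier" "Psi (grading_aut (1 / t) ?x) = sv_br c (grading_aut (1 / t) ?x)"
      using loc grading_aut_carrier[OF xc] unfolding locally_inner_def by blast
    have "grading_aut t (Psi (grading_aut (1 / t) ?x)) = sv_br (grading_aut t c) ?x"
      using c grading_aut_br[OF t c(1) grading_aut_carrier[OF xc, of "1 / t"]] grading_aut_inverse[OF t] by simp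
    moreover have "grading_aut t (Psi (grading_aut (1 / t) ?x)) = (\<lambda>i. \<Sum>k\<in>K. t powi k * v k i)"
    proof
      fix i
      have "grading_aut t (Psi (grading_aut (1 / t) ?x)) i = t powi (sv_wt i - sv_wt f) * ?yf i + t powi (sv_wt i - sv_wt F) * ?yF i"
        unfolding px sv_linear_pair[OF lin] using t
        by (simp add: grading_aut_def power_int_divide_distrib power_int_diff field_simps)
      also have "\<dots> = (\<Sum>k\<in>K. t powi k * v k i)"
        using sum_power_int_wt_part[OF fK inK(1), where t=t] sum_power_int_wt_part[OF fK inK(2), where t=t]
        by (simp add: v_def distrib_left sum.distrib)
      finally show "grading_aut t (Psi (grading_aut (1 / t) ?x)) i = (\<Sum>k\<in>K. t powi k * v k i)" .
    qed
    ultimately show ?thesis using grading_aut_carrier[OF c(1)] unfolding br_space_def by auto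
  qed
  show ?thesis
  proof (cases "k \<in> K")
    case True
    then show ?thesis using vandermonde_closed[OF fK conj] unfolding v_def by blast
  next
    case False
    then have "wt_part k ?yf (sv_wt f) = (\<lambda>i. 0)" "wt_part k ?yF (sv_wt F) = (\<lambda>i. 0)"
      using inK by (metis wt_part_eq_zero)+
    then show ?thesis using zero by simp
  qed
qed

section \<open>Two-term recurrences along arithmetic progressions\<close>

lemma small_plus_multiple_ne_zero:
  fixes D c m :: int
  assumes "D > 0" "\<bar>c\<bar> < D" "c \<noteq> 0"
  shows "c + m * D \<noteq> 0"
proof (cases "m = 0")
  case False
  show ?thesis
  proof (cases "m \<ge> 1")
    case True
    then have "m * D \<ge> 1 * D" using assms(1) by (intro mult_right_mono) auto
    then show ?thesis using assms by linarith
  next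
    case False2: False
    then have "m \<le> -1" using False by simp
    then have "m * D \<le> (-1) * D" using assms(1) by (intro mult_right_mono) auto
    then show ?thesis using assms by linarith
  qed
qed (use assms in simp)

lemma small_plus_nonzero_multiple_ne_zero:
  fixes D c m :: int
  assumes "D > 0" "\<bar>c\<bar> < D" "m \<noteq> 0"
  shows "c + m * D \<noteq> 0"
proof (cases "c = 0")
  case True then show ?thesis using assms by simp
next
  case False then show ?thesis using small_plus_multiple_ne_zero assms by blast
qed

lemma vanish_from_above:
  fixes b :: "int \<Rightarrow> 'a::zero"
  assumes fin: "finite {j. b j \<noteq> 0}" and step: "\<And>j. j \<ge> j0 \<Longrightarrow> b (j + 1) = 0 \<Longrightarrow> b j = 0"
    and j: "j \<ge> j0"
  shows "b j = 0"
proof -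
  obtain M where M: "\<And>j. b j \<noteq> 0 \<Longrightarrow> j \<le> M"
    using bdd_above_finite[OF fin] unfolding bdd_above_def by auto
  have below: "b (M + 1 - int n) = 0" if "M + 1 - int n \<ge> j0" for n
    using that
  proof (induction n)
    case 0
    then show ?case using M[of "M + 1"] by force
  next
    case (Suc n)
    then show ?case using step[of "M + 1 - int (Suc n)"] by (simp add: algebra_simps)
  qed
  show ?thesis
  proof (cases "j > M")
    case True
    then show ?thesis using M by force
  next
    case False
    then show ?thesis using below[of "nat (M + 1 - j)"] j by simp
  qed
qed

lemma vanish_from_below:
  fixes b :: "int \<Rightarrow> 'a::zero"
  assumes fin: "finite {j. b j \<noteq> 0}" and step: "\<And>j. j \<le> j0 \<Longrightarrow> b (j - 1) = 0 \<Longrightarrow> b j = 0"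
    and j: "j \<le> j0"
  shows "b j = 0"
proof -
  define b' where "b' j = b (- j)" for j
  have "finite {j. b' j \<noteq> 0}"
    using finite_vimageI[OF fin, of uminus] by (simp add: vimage_def b'_def)
  then have "b' (- j) = 0"
    by (rule vanish_from_above[of b' "- j0" "- j"]) (use step j in \<open>auto simp: b'_def algebra_simps\<close>)
  then show ?thesis by (simp add: b'_def)
qed

lemma two_term_recurrence:
  fixes b c d :: "int \<Rightarrow> complex"
  assumes fin: "finite {j. b j \<noteq> 0}"
    and eq: "\<And>j. c j * b j + d j * b (j - 1) = (if j = 0 then r0 else if j = 1 then r1 else 0)"
    and dn: "\<forall>j\<ge>2. d j \<noteq> 0" and cn: "\<forall>j\<le>-1. c j \<noteq> 0"
  shows two_term_recurrence_zero: "\<And>j. j \<noteq> 0 \<Longrightarrow> b j = 0"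
    and two_term_recurrence_rhs0: "r0 = c 0 * b 0"
    and two_term_recurrence_rhs1: "r1 = d 1 * b 0"
proof -
  have up: "b j = 0" if "j \<ge> 1" for j
  proof (rule vanish_from_above[OF fin _ that])
    fix j :: int assume "j \<ge> 1" "b (j + 1) = 0"
    then show "b j = 0" using eq[of "j + 1"] dn by auto
  qed
  have down: "b j = 0" if "j \<le> -1" for j
  proof (rule vanish_from_below[OF fin _ that])
    fix j :: int assume "j \<le> -1" "b (j - 1) = 0"
    then show "b j = 0" using eq[of j] cn by auto
  qed
  show z: "b j = 0" if "j \<noteq> 0" for j
    using up down that by (cases "j \<ge> 1") auto
  show "r0 = c 0 * b 0" using eq[of 0] z[of "-1"] by simp
  show "r1 = d 1 * b 0" using eq[of 1] z[of 1] by simp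
qed

lemma finite_supp_progression:
  assumes a: "a \<in> sv_carrier" and X: "inj X" and D: "D \<noteq> (0::int)"
  shows "finite {j. a (X (k + j * D)) \<noteq> 0}"
proof -
  have "{j. a (X (k + j * D)) \<noteq> 0} = (\<lambda>j. X (k + j * D)) -` sv_supp a" by (auto simp: sv_supp_def)
  moreover have "inj (\<lambda>j. X (k + j * D))"
  proof (rule injI)
    fix x y assume "X (k + x * D) = X (k + y * D)"
    then have "k + x * D = k + y * D" by (rule injD[OF X])
    then show "x = y" using D by simp
  qed
  then have "finite ((\<lambda>j. X (k + j * D)) -` sv_supp a)"
    using a by (intro finite_vimageI) (simp_all add: sv_carrier_iff)
  ultimately show ?thesis by simp
qed

lemma inj_Lb: "inj Lb" by (simp add: inj_def)
lemma inj_Gb: "inj Gb" by (simp add: inj_def)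

lemma finite_supp_alternating:
  assumes "a \<in> sv_carrier" "D \<noteq> (0::int)"
  shows "finite {j. (if P j then a (Lb (k + j * D)) else a (Gb (k + j * D))) \<noteq> 0}"
proof -
  have "{j. (if P j then a (Lb (k + j * D)) else a (Gb (k + j * D))) \<noteq> 0}
      \<subseteq> {j. a (Lb (k + j * D)) \<noteq> 0} \<union> {j. a (Gb (k + j * D)) \<noteq> 0}"
    by auto
  then show ?thesis
    using finite_supp_progression[OF assms(1) inj_Lb assms(2)] finite_supp_progression[OF assms(1) inj_Gb assms(2)]
    by (simp add: finite_subset)
qed

lemma zero_off_first_weight:
  assumes hy: "\<And>i. y i \<noteq> 0 \<Longrightarrow> sv_wt i = w + k" and D: "w < W"
    and wi: "sv_wt i = w + k + j * (W - w)" and j: "j \<noteq> 0"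
  shows "y i = 0"
proof (rule ccontr)
  assume "y i \<noteq> 0"
  then have "sv_wt i = w + k" by (rule hy)
  then have "j * (W - w) = 0" using wi by simp
  then show False using j D by simp
qed

lemma zero_off_second_weight:
  assumes hy: "\<And>i. y i \<noteq> 0 \<Longrightarrow> sv_wt i = W + k" and D: "w < W"
    and wi: "sv_wt i = w + k + j * (W - w)" and j: "j \<noteq> 1"
  shows "y i = 0"
proof (rule ccontr)
  assume "y i \<noteq> 0"
  then have "sv_wt i = W + k" by (rule hy)
  then have "(j - 1) * (W - w) = 0" using wi by (simp add: algebra_simps)
  then show False using j D by simp
qed

text \<open>In the following, \<open>y\<^sub>1 + y\<^sub>2 = [a, X\<^sub>w] + [a, Y\<^sub>W]\<close> with \<open>y\<^sub>1\<close> of weight \<open>w + k\<close> and \<open>y\<^sub>2\<close> of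
  weight \<open>W + k\<close>. The coefficient at weight \<open>w + k + j (W - w)\<close> links the coefficients of a at
  \<open>k + j (W - w)\<close> and \<open>k + (j - 1) (W - w)\<close>, and \<open>y\<^sub>1\<close>, \<open>y\<^sub>2\<close> only enter at \<open>j = 0\<close> and \<open>j = 1\<close>.\<close>

lemma pair_LL_Lpart:
  assumes a: "a \<in> sv_carrier"
  and E: "\<And>i. y1 i + y2 i = sv_br a (sv_basis (Lb w)) i + sv_br a (sv_basis (Lb W)) i"
  and h1: "\<And>i. y1 i \<noteq> 0 \<Longrightarrow> sv_wt i = w + k" and h2: "\<And>i. y2 i \<noteq> 0 \<Longrightarrow> sv_wt i = W + k"
  and D: "w < W"
  and dn: "\<And>j. j \<ge> 2 \<Longrightarrow> k - w + (j - 2) * (W - w) \<noteq> 0"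
  and cn: "\<And>j. j \<le> -1 \<Longrightarrow> k - w + j * (W - w) \<noteq> 0"
  shows "\<And>j. j \<noteq> 0 \<Longrightarrow> a (Lb (k + j * (W - w))) = 0"
    and "y1 (Lb (w + k)) = of_int (k - w) * a (Lb k)"
    and "y2 (Lb (W + k)) = of_int (k - W) * a (Lb k)"
proof -
  define \<beta> where "\<beta> j = a (Lb (k + j * (W - w)))" for j
  define c where "c j = (of_int (k - w + j * (W - w)) :: complex)" for j
  define d where "d j = (of_int (k - w + (j - 2) * (W - w)) :: complex)" for j
  have fin: "finite {j. \<beta> j \<noteq> 0}" unfolding \<beta>_def using finite_supp_progression[OF a inj_Lb] D by simp
  have eq: "c j * \<beta> j + d j * \<beta> (j - 1) = (if j = 0 then y1 (Lb (w + k)) else if j = 1 then y2 (Lb (W + k)) else 0)" for j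
  proof -
    let ?z = "w + k + j * (W - w)"
    have e: "y1 (Lb ?z) + y2 (Lb ?z) = a (Lb (?z - w)) * of_int (?z - 2 * w) + a (Lb (?z - W)) * of_int (?z - 2 * W)"
      using E[of "Lb ?z"] by (simp add: sv_br_right_LL[OF a])
    have i1: "?z - w = k + j * (W - w)" by simp
    have i2: "?z - W = k + (j - 1) * (W - w)" by (simp add: algebra_simps)
    have i3: "?z - 2 * w = k - w + j * (W - w)" by simp
    have i4: "?z - 2 * W = k - w + (j - 2) * (W - w)" by (simp add: algebra_simps)
    have y1z: "y1 (Lb ?z) = (if j = 0 then y1 (Lb (w + k)) else 0)"
      using zero_off_first_weight[where y=y1, OF h1 D, where i="Lb ?z" and j=j] by simp
    have y2z: "y2 (Lb ?z) = (if j = 1 then y2 (Lb (W + k)) else 0)"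
      using zero_off_second_weight[where y=y2, OF h2 D, where i="Lb ?z" and j=j] by (auto simp: add.commute)
    show ?thesis using e y1z y2z unfolding i1 i2 i3 i4 \<beta>_def c_def d_def
      by (auto simp: algebra_simps)
  qed
  have dn': "\<forall>j\<ge>2. d j \<noteq> 0" unfolding d_def of_int_eq_0_iff using dn by blast
  have cn': "\<forall>j\<le>-1. c j \<noteq> 0" unfolding c_def of_int_eq_0_iff using cn by blast
  note ch = two_term_recurrence[where b=\<beta> and c=c and d=d, OF fin eq dn' cn']
  show "a (Lb (k + j * (W - w))) = 0" if "j \<noteq> 0" for j using ch(1)[OF that] unfolding \<beta>_def .
  show "y1 (Lb (w + k)) = of_int (k - w) * a (Lb k)" using ch(2) unfolding c_def \<beta>_def by simp
  show "y2 (Lb (W + k)) = of_int (k - W) * a (Lb k)" using ch(3) unfolding d_def \<beta>_def by (simp add: algebra_simps)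
qed

lemma pair_LL_Gpart:
  assumes a: "a \<in> sv_carrier"
  and E: "\<And>i. y1 i + y2 i = sv_br a (sv_basis (Lb w)) i + sv_br a (sv_basis (Lb W)) i"
  and h1: "\<And>i. y1 i \<noteq> 0 \<Longrightarrow> sv_wt i = w + k" and h2: "\<And>i. y2 i \<noteq> 0 \<Longrightarrow> sv_wt i = W + k"
  and D: "w < W"
  and dn: "\<And>j. j \<ge> 2 \<Longrightarrow> 2 * k - w + (2 * j - 3) * (W - w) \<noteq> 0"
  and cn: "\<And>j. j \<le> -1 \<Longrightarrow> 2 * k - w + 2 * j * (W - w) \<noteq> 0"
  shows "\<And>j. j \<noteq> 0 \<Longrightarrow> a (Gb (k + j * (W - w))) = 0"
    and "y1 (Gb (w + k)) = of_int (2 * k - w) / 2 * a (Gb k)"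
    and "y2 (Gb (W + k)) = of_int (2 * k - W) / 2 * a (Gb k)"
proof -
  define \<beta> where "\<beta> j = a (Gb (k + j * (W - w)))" for j
  define c where "c j = (of_int (2 * k - w + 2 * j * (W - w)) / 2 :: complex)" for j
  define d where "d j = (of_int (2 * k - w + (2 * j - 3) * (W - w)) / 2 :: complex)" for j
  have fin: "finite {j. \<beta> j \<noteq> 0}" unfolding \<beta>_def using finite_supp_progression[OF a inj_Gb] D by simp
  have eq: "c j * \<beta> j + d j * \<beta> (j - 1) = (if j = 0 then y1 (Gb (w + k)) else if j = 1 then y2 (Gb (W + k)) else 0)" for j
  proof -
    let ?z = "w + k + j * (W - w)"
    have e: "y1 (Gb ?z) + y2 (Gb ?z) = a (Gb (?z - w)) * (of_int ?z - 3/2 * of_int w) + a (Gb (?z - W)) * (of_int ?z - 3/2 * of_int W)"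
      using E[of "Gb ?z"] by (simp add: sv_br_right_LG[OF a])
    have i1: "?z - w = k + j * (W - w)" by simp
    have i2: "?z - W = k + (j - 1) * (W - w)" by (simp add: algebra_simps)
    have i3: "(of_int ?z - 3/2 * of_int w :: complex) = c j" unfolding c_def by (simp add: field_simps)
    have i4: "(of_int ?z - 3/2 * of_int W :: complex) = d j" unfolding d_def by (simp add: field_simps)
    have y1z: "y1 (Gb ?z) = (if j = 0 then y1 (Gb (w + k)) else 0)"
      using zero_off_first_weight[where y=y1, OF h1 D, where i="Gb ?z" and j=j] by simp
    have y2z: "y2 (Gb ?z) = (if j = 1 then y2 (Gb (W + k)) else 0)"
      using zero_off_second_weight[where y=y2, OF h2 D, where i="Gb ?z" and j=j] by (auto simp: add.commute)
    show ?thesis using e y1z y2z unfolding i1 i2 i3 i4 \<beta>_def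
      by (auto simp: algebra_simps)
  qed
  have dn': "\<forall>j\<ge>2. d j \<noteq> 0" unfolding d_def divide_eq_0_iff of_int_eq_0_iff using dn by simp
  have cn': "\<forall>j\<le>-1. c j \<noteq> 0" unfolding c_def divide_eq_0_iff of_int_eq_0_iff using cn by simp
  note ch = two_term_recurrence[where b=\<beta> and c=c and d=d, OF fin eq dn' cn']
  show "a (Gb (k + j * (W - w))) = 0" if "j \<noteq> 0" for j using ch(1)[OF that] unfolding \<beta>_def .
  show "y1 (Gb (w + k)) = of_int (2 * k - w) / 2 * a (Gb k)" using ch(2) unfolding c_def \<beta>_def by simp
  show "y2 (Gb (W + k)) = of_int (2 * k - W) / 2 * a (Gb k)" using ch(3) unfolding d_def \<beta>_def by (simp add: algebra_simps)
qed

lemma pair_GG_Lpart: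
  assumes a: "a \<in> sv_carrier"
  and E: "\<And>i. y1 i + y2 i = sv_br a (sv_basis (Gb w)) i + sv_br a (sv_basis (Gb W)) i"
  and h1: "\<And>i. y1 i \<noteq> 0 \<Longrightarrow> sv_wt i = w + k" and h2: "\<And>i. y2 i \<noteq> 0 \<Longrightarrow> sv_wt i = W + k"
  and D: "w < W"
  shows "\<And>j. j \<noteq> 0 \<Longrightarrow> a (Gb (k + j * (W - w))) = 0"
    and "y1 (Lb (w + k)) = 2 * a (Gb k)"
    and "y2 (Lb (W + k)) = 2 * a (Gb k)"
proof -
  define \<beta> where "\<beta> j = a (Gb (k + j * (W - w)))" for j
  define c where "c j = (2 :: complex)" for j :: int
  define d where "d j = (2 :: complex)" for j :: int
  have fin: "finite {j. \<beta> j \<noteq> 0}" unfolding \<beta>_def using finite_supp_progression[OF a inj_Gb] D by simp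
  have eq: "c j * \<beta> j + d j * \<beta> (j - 1) = (if j = 0 then y1 (Lb (w + k)) else if j = 1 then y2 (Lb (W + k)) else 0)" for j
  proof -
    let ?z = "w + k + j * (W - w)"
    have e: "y1 (Lb ?z) + y2 (Lb ?z) = 2 * a (Gb (?z - w)) + 2 * a (Gb (?z - W))"
      using E[of "Lb ?z"] by (simp add: sv_br_right_GL[OF a])
    have i1: "?z - w = k + j * (W - w)" by simp
    have i2: "?z - W = k + (j - 1) * (W - w)" by (simp add: algebra_simps)
    have y1z: "y1 (Lb ?z) = (if j = 0 then y1 (Lb (w + k)) else 0)"
      using zero_off_first_weight[where y=y1, OF h1 D, where i="Lb ?z" and j=j] by simp
    have y2z: "y2 (Lb ?z) = (if j = 1 then y2 (Lb (W + k)) else 0)"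
      using zero_off_second_weight[where y=y2, OF h2 D, where i="Lb ?z" and j=j] by (auto simp: add.commute)
    show ?thesis using e y1z y2z unfolding i1 i2 \<beta>_def c_def d_def
      by (auto simp: algebra_simps)
  qed
  have dn': "\<forall>j\<ge>2. d j \<noteq> 0" unfolding d_def by simp
  have cn': "\<forall>j\<le>-1. c j \<noteq> 0" unfolding c_def by simp
  note ch = two_term_recurrence[where b=\<beta> and c=c and d=d, OF fin eq dn' cn']
  show "a (Gb (k + j * (W - w))) = 0" if "j \<noteq> 0" for j using ch(1)[OF that] unfolding \<beta>_def .
  show "y1 (Lb (w + k)) = 2 * a (Gb k)" using ch(2) unfolding c_def \<beta>_def by simp
  show "y2 (Lb (W + k)) = 2 * a (Gb k)" using ch(3) unfolding d_def \<beta>_def by simp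
qed

lemma pair_GG_Gpart:
  assumes a: "a \<in> sv_carrier"
  and E: "\<And>i. y1 i + y2 i = sv_br a (sv_basis (Gb w)) i + sv_br a (sv_basis (Gb W)) i"
  and h1: "\<And>i. y1 i \<noteq> 0 \<Longrightarrow> sv_wt i = w + k" and h2: "\<And>i. y2 i \<noteq> 0 \<Longrightarrow> sv_wt i = W + k"
  and D: "w < W"
  and dn: "\<And>j. j \<ge> 2 \<Longrightarrow> k - 2 * w + (j - 3) * (W - w) \<noteq> 0"
  and cn: "\<And>j. j \<le> -1 \<Longrightarrow> k - 2 * w + j * (W - w) \<noteq> 0"
  shows "\<And>j. j \<noteq> 0 \<Longrightarrow> a (Lb (k + j * (W - w))) = 0"
    and "y1 (Gb (w + k)) = of_int (k - 2 * w) / 2 * a (Lb k)"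
    and "y2 (Gb (W + k)) = of_int (k - 2 * W) / 2 * a (Lb k)"
proof -
  define \<beta> where "\<beta> j = a (Lb (k + j * (W - w)))" for j
  define c where "c j = (of_int (k - 2 * w + j * (W - w)) / 2 :: complex)" for j
  define d where "d j = (of_int (k - 2 * w + (j - 3) * (W - w)) / 2 :: complex)" for j
  have fin: "finite {j. \<beta> j \<noteq> 0}" unfolding \<beta>_def using finite_supp_progression[OF a inj_Lb] D by simp
  have eq: "c j * \<beta> j + d j * \<beta> (j - 1) = (if j = 0 then y1 (Gb (w + k)) else if j = 1 then y2 (Gb (W + k)) else 0)" for j
  proof -
    let ?z = "w + k + j * (W - w)"
    have e: "y1 (Gb ?z) + y2 (Gb ?z) = a (Lb (?z - w)) * ((of_int ?z - of_int w) / 2 - of_int w) + a (Lb (?z - W)) * ((of_int ?z - of_int W) / 2 - of_int W)"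
      using E[of "Gb ?z"] by (simp add: sv_br_right_GG[OF a])
    have i1: "?z - w = k + j * (W - w)" by simp
    have i2: "?z - W = k + (j - 1) * (W - w)" by (simp add: algebra_simps)
    have i3: "((of_int ?z - of_int w) / 2 - of_int w :: complex) = c j" unfolding c_def by (simp add: field_simps)
    have i4: "((of_int ?z - of_int W) / 2 - of_int W :: complex) = d j" unfolding d_def by (simp add: field_simps)
    have y1z: "y1 (Gb ?z) = (if j = 0 then y1 (Gb (w + k)) else 0)"
      using zero_off_first_weight[where y=y1, OF h1 D, where i="Gb ?z" and j=j] by simp
    have y2z: "y2 (Gb ?z) = (if j = 1 then y2 (Gb (W + k)) else 0)"
      using zero_off_second_weight[where y=y2, OF h2 D, where i="Gb ?z" and j=j] by (auto simp: add.commute)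
    show ?thesis using e y1z y2z unfolding i1 i2 i3 i4 \<beta>_def
      by (auto simp: algebra_simps)
  qed
  have dn': "\<forall>j\<ge>2. d j \<noteq> 0" unfolding d_def divide_eq_0_iff of_int_eq_0_iff using dn by simp
  have cn': "\<forall>j\<le>-1. c j \<noteq> 0" unfolding c_def divide_eq_0_iff of_int_eq_0_iff using cn by simp
  note ch = two_term_recurrence[where b=\<beta> and c=c and d=d, OF fin eq dn' cn']
  show "a (Lb (k + j * (W - w))) = 0" if "j \<noteq> 0" for j using ch(1)[OF that] unfolding \<beta>_def .
  show "y1 (Gb (w + k)) = of_int (k - 2 * w) / 2 * a (Lb k)" using ch(2) unfolding c_def \<beta>_def by simp
  show "y2 (Gb (W + k)) = of_int (k - 2 * W) / 2 * a (Lb k)" using ch(3) unfolding d_def \<beta>_def by (simp add: algebra_simps)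
qed

lemma pair_LG_LG_parts:
  assumes a: "a \<in> sv_carrier"
  and E: "\<And>i. y1 i + y2 i = sv_br a (sv_basis (Lb w)) i + sv_br a (sv_basis (Gb W)) i"
  and h1: "\<And>i. y1 i \<noteq> 0 \<Longrightarrow> sv_wt i = w + k" and h2: "\<And>i. y2 i \<noteq> 0 \<Longrightarrow> sv_wt i = W + k"
  and D: "w < W"
  and dn: "\<And>j. j \<ge> 2 \<Longrightarrow> k - 2 * w + (j - 3) * (W - w) \<noteq> 0"
  and cn: "\<And>j. j \<le> -1 \<Longrightarrow> k - w + j * (W - w) \<noteq> 0 \<and> 2 * k - w + 2 * j * (W - w) \<noteq> 0"
  shows "y1 (Lb (w + k)) = of_int (k - w) * a (Lb k)"
    and "y2 (Gb (W + k)) = of_int (k - 2 * w - 2 * (W - w)) / 2 * a (Lb k)"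
proof -
  define \<beta> where "\<beta> j = (if even j then a (Lb (k + j * (W - w))) else a (Gb (k + j * (W - w))))" for j
  define c where "c j = (if even j then of_int (k - w + j * (W - w)) else of_int (2 * k - w + 2 * j * (W - w)) / 2 :: complex)" for j
  define d where "d j = (if even j then 2 else of_int (k - 2 * w + (j - 3) * (W - w)) / 2 :: complex)" for j
  have fin: "finite {j. \<beta> j \<noteq> 0}"
    unfolding \<beta>_def using finite_supp_alternating[OF a] D by simp
  have eq: "c j * \<beta> j + d j * \<beta> (j - 1) = (if j = 0 then y1 (Lb (w + k)) else if j = 1 then y2 (Gb (W + k)) else 0)" for j
  proof -
    let ?z = "w + k + j * (W - w)"
    have i1: "?z - w = k + j * (W - w)" by simp
    have i2: "?z - W = k + (j - 1) * (W - w)" by (simp add: algebra_simps)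
    show ?thesis
    proof (cases "even j")
      case True
      have e: "y1 (Lb ?z) + y2 (Lb ?z) = a (Lb (?z - w)) * of_int (?z - 2 * w) + 2 * a (Gb (?z - W))"
        using E[of "Lb ?z"] by (simp add: sv_br_right_LL[OF a] sv_br_right_GL[OF a])
      have y1z: "y1 (Lb ?z) = (if j = 0 then y1 (Lb (w + k)) else 0)"
        using zero_off_first_weight[where y=y1, OF h1 D, where i="Lb ?z" and j=j] by simp
      have j1: "j \<noteq> 1" using True by (cases "j = 1") simp_all
      have y2z: "y2 (Lb ?z) = 0" using zero_off_second_weight[where y=y2, OF h2 D, where i="Lb ?z" and j=j] j1 by simp
      show ?thesis using e y1z y2z True j1 unfolding i1 i2 \<beta>_def c_def d_def
        by (auto simp: algebra_simps)
    next
      case False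
      have e: "y1 (Gb ?z) + y2 (Gb ?z) = a (Gb (?z - w)) * (of_int ?z - 3/2 * of_int w) + a (Lb (?z - W)) * ((of_int ?z - of_int W) / 2 - of_int W)"
        using E[of "Gb ?z"] by (simp add: sv_br_right_LG[OF a] sv_br_right_GG[OF a])
      have j0: "j \<noteq> 0" using False by (cases "j = 0") simp_all
      have y1z: "y1 (Gb ?z) = 0" using zero_off_first_weight[where y=y1, OF h1 D, where i="Gb ?z" and j=j] j0 by simp
      have y2z: "y2 (Gb ?z) = (if j = 1 then y2 (Gb (W + k)) else 0)"
        using zero_off_second_weight[where y=y2, OF h2 D, where i="Gb ?z" and j=j] by (auto simp: add.commute)
      have c3: "(of_int ?z - 3/2 * of_int w :: complex) = of_int (2 * k - w + 2 * j * (W - w)) / 2"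
        by (simp add: field_simps)
      have c4: "((of_int ?z - of_int W) / 2 - of_int W :: complex) = of_int (k - 2 * w + (j - 3) * (W - w)) / 2"
        by (simp add: field_simps)
      show ?thesis using e y1z y2z False j0 unfolding i1 i2 c3 c4 \<beta>_def c_def d_def
        by (auto simp: algebra_simps)
    qed
  qed
  have dn': "\<forall>j\<ge>2. d j \<noteq> 0" using dn by (simp add: d_def del: of_int_add of_int_diff of_int_mult)
  have cn': "\<forall>j\<le>-1. c j \<noteq> 0" using cn by (simp add: c_def del: of_int_add of_int_diff of_int_mult)
  note ch = two_term_recurrence[where b=\<beta> and c=c and d=d, OF fin eq dn' cn']
  show "y1 (Lb (w + k)) = of_int (k - w) * a (Lb k)" using ch(2) unfolding c_def \<beta>_def by simp
  show "y2 (Gb (W + k)) = of_int (k - 2 * w - 2 * (W - w)) / 2 * a (Lb k)" using ch(3) unfolding d_def \<beta>_def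
    by (simp add: algebra_simps)
qed

lemma pair_LG_GL_parts:
  assumes a: "a \<in> sv_carrier"
  and E: "\<And>i. y1 i + y2 i = sv_br a (sv_basis (Lb w)) i + sv_br a (sv_basis (Gb W)) i"
  and h1: "\<And>i. y1 i \<noteq> 0 \<Longrightarrow> sv_wt i = w + k" and h2: "\<And>i. y2 i \<noteq> 0 \<Longrightarrow> sv_wt i = W + k"
  and D: "w < W"
  and dn: "\<And>j. j \<ge> 2 \<Longrightarrow> k - 2 * w + (j - 3) * (W - w) \<noteq> 0"
  and cn: "\<And>j. j \<le> -1 \<Longrightarrow> k - w + j * (W - w) \<noteq> 0 \<and> 2 * k - w + 2 * j * (W - w) \<noteq> 0"
  shows "y1 (Gb (w + k)) = of_int (2 * k - w) / 2 * a (Gb k)"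
    and "y2 (Lb (W + k)) = 2 * a (Gb k)"
proof -
  define \<beta> where "\<beta> j = (if odd j then a (Lb (k + j * (W - w))) else a (Gb (k + j * (W - w))))" for j
  define c where "c j = (if odd j then of_int (k - w + j * (W - w)) else of_int (2 * k - w + 2 * j * (W - w)) / 2 :: complex)" for j
  define d where "d j = (if odd j then 2 else of_int (k - 2 * w + (j - 3) * (W - w)) / 2 :: complex)" for j
  have fin: "finite {j. \<beta> j \<noteq> 0}"
    unfolding \<beta>_def using finite_supp_alternating[OF a] D by simp
  have eq: "c j * \<beta> j + d j * \<beta> (j - 1) = (if j = 0 then y1 (Gb (w + k)) else if j = 1 then y2 (Lb (W + k)) else 0)" for j
  proof -
    let ?z = "w + k + j * (W - w)"
    have i1: "?z - w = k + j * (W - w)" by simp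
    have i2: "?z - W = k + (j - 1) * (W - w)" by (simp add: algebra_simps)
    show ?thesis
    proof (cases "even j")
      case True
      have j1: "j \<noteq> 1" using True by (cases "j = 1") simp_all
      have e: "y1 (Gb ?z) + y2 (Gb ?z) = a (Gb (?z - w)) * (of_int ?z - 3/2 * of_int w) + a (Lb (?z - W)) * ((of_int ?z - of_int W) / 2 - of_int W)"
        using E[of "Gb ?z"] by (simp add: sv_br_right_LG[OF a] sv_br_right_GG[OF a])
      have y1z: "y1 (Gb ?z) = (if j = 0 then y1 (Gb (w + k)) else 0)"
        using zero_off_first_weight[where y=y1, OF h1 D, where i="Gb ?z" and j=j] by simp
      have y2z: "y2 (Gb ?z) = 0" using zero_off_second_weight[where y=y2, OF h2 D, where i="Gb ?z" and j=j] j1 by simp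
      have c3: "(of_int ?z - 3/2 * of_int w :: complex) = of_int (2 * k - w + 2 * j * (W - w)) / 2"
        by (simp add: field_simps)
      have c4: "((of_int ?z - of_int W) / 2 - of_int W :: complex) = of_int (k - 2 * w + (j - 3) * (W - w)) / 2"
        by (simp add: field_simps)
      show ?thesis using e y1z y2z True j1 unfolding i1 i2 c3 c4 \<beta>_def c_def d_def
        by (auto simp: algebra_simps)
    next
      case False
      have j0: "j \<noteq> 0" using False by (cases "j = 0") simp_all
      have e: "y1 (Lb ?z) + y2 (Lb ?z) = a (Lb (?z - w)) * of_int (?z - 2 * w) + 2 * a (Gb (?z - W))"
        using E[of "Lb ?z"] by (simp add: sv_br_right_LL[OF a] sv_br_right_GL[OF a])
      have y1z: "y1 (Lb ?z) = 0" using zero_off_first_weight[where y=y1, OF h1 D, where i="Lb ?z" and j=j] j0 by simp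
      have y2z: "y2 (Lb ?z) = (if j = 1 then y2 (Lb (W + k)) else 0)"
        using zero_off_second_weight[where y=y2, OF h2 D, where i="Lb ?z" and j=j] by (auto simp: add.commute)
      show ?thesis using e y1z y2z False j0 unfolding i1 i2 \<beta>_def c_def d_def
        by (auto simp: algebra_simps)
    qed
  qed
  have dn': "\<forall>j\<ge>2. d j \<noteq> 0" using dn by (simp add: d_def del: of_int_add of_int_diff of_int_mult)
  have cn': "\<forall>j\<le>-1. c j \<noteq> 0" using cn by (simp add: c_def del: of_int_add of_int_diff of_int_mult)
  note ch = two_term_recurrence[where b=\<beta> and c=c and d=d, OF fin eq dn' cn']
  show "y1 (Gb (w + k)) = of_int (2 * k - w) / 2 * a (Gb k)" using ch(2) unfolding c_def \<beta>_def by simp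
  show "y2 (Lb (W + k)) = 2 * a (Gb k)" using ch(3) unfolding d_def \<beta>_def by simp
qed

lemma wt_concentrated_eq_zero:
  assumes h: "\<And>i. y i \<noteq> 0 \<Longrightarrow> sv_wt i = v" and l: "y (Lb v) = 0" and g: "y (Gb v) = 0"
    and c: "v = 0 \<Longrightarrow> y Cb = 0"
  shows "y i = 0"
proof (cases i)
  case (Lb m) then show ?thesis using h[of i] l by (cases "m = v") auto
next
  case (Gb m) then show ?thesis using h[of i] g by (cases "m = v") auto
next
  case Cb then show ?thesis using h[of i] c by (cases "v = 0") auto
qed

lemma pair_LL_vanish_right:
  assumes a: "a \<in> sv_carrier"
  and E: "\<And>i. y1 i + y2 i = sv_br a (sv_basis (Lb w)) i + sv_br a (sv_basis (Lb W)) i"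
  and h1: "\<And>i. y1 i \<noteq> 0 \<Longrightarrow> sv_wt i = w + k" and h2: "\<And>i. y2 i \<noteq> 0 \<Longrightarrow> sv_wt i = W + k"
  and D: "w < W"
  and dnL: "\<And>j. j \<ge> 2 \<Longrightarrow> k - w + (j - 2) * (W - w) \<noteq> 0"
  and cnL: "\<And>j. j \<le> -1 \<Longrightarrow> k - w + j * (W - w) \<noteq> 0"
  and dnG: "\<And>j. j \<ge> 2 \<Longrightarrow> 2 * k - w + (2 * j - 3) * (W - w) \<noteq> 0"
  and cnG: "\<And>j. j \<le> -1 \<Longrightarrow> 2 * k - w + 2 * j * (W - w) \<noteq> 0"
  and y1z: "\<And>i. y1 i = 0" and kw: "k \<noteq> w" and kw2: "2 * k \<noteq> w" and Wk: "W + k \<noteq> 0"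
  shows "y2 i = 0"
proof -
  note L = pair_LL_Lpart[OF a E h1 h2 D dnL cnL]
  note G = pair_LL_Gpart[OF a E h1 h2 D dnG cnG]
  have aL: "a (Lb k) = 0" using L(2) y1z kw by simp
  have kw2c: "(2 * of_int k :: complex) \<noteq> of_int w" using kw2 by (metis of_int_eq_iff of_int_mult of_int_numeral)
  have aG: "a (Gb k) = 0" using G(2) y1z kw2c by simp
  show ?thesis
  proof (rule wt_concentrated_eq_zero[OF h2])
    show "y2 (Lb (W + k)) = 0" using L(3) aL by simp
    show "y2 (Gb (W + k)) = 0" using G(3) aG by simp
    show "W + k = 0 \<Longrightarrow> y2 Cb = 0" using Wk by simp
  qed
qed

lemma pair_LL_vanish_left:
  assumes a: "a \<in> sv_carrier"
  and E: "\<And>i. y1 i + y2 i = sv_br a (sv_basis (Lb w)) i + sv_br a (sv_basis (Lb W)) i"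
  and h1: "\<And>i. y1 i \<noteq> 0 \<Longrightarrow> sv_wt i = w + k" and h2: "\<And>i. y2 i \<noteq> 0 \<Longrightarrow> sv_wt i = W + k"
  and D: "w < W"
  and dnG: "\<And>j. j \<ge> 2 \<Longrightarrow> 2 * k - w + (2 * j - 3) * (W - w) \<noteq> 0"
  and cnG: "\<And>j. j \<le> -1 \<Longrightarrow> 2 * k - w + 2 * j * (W - w) \<noteq> 0"
  and Lc: "((\<forall>j\<ge>2. k - w + (j - 2) * (W - w) \<noteq> 0) \<and> (\<forall>j\<le>-1. k - w + j * (W - w) \<noteq> 0))
           \<or> (y1 (Lb (w + k)) = 0 \<and> w + k \<noteq> 0)"
  and y2z: "\<And>i. y2 i = 0" and kW: "k \<noteq> W" and kW2: "2 * k \<noteq> W"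
  shows "y1 i = 0"
proof -
  note G = pair_LL_Gpart[OF a E h1 h2 D dnG cnG]
  have kW2c: "(2 * of_int k :: complex) \<noteq> of_int W" using kW2 by (metis of_int_eq_iff of_int_mult of_int_numeral)
  have aG: "a (Gb k) = 0" using G(3) y2z kW2c by simp
  have gG: "y1 (Gb (w + k)) = 0" using G(2) aG by simp
  show ?thesis
  proof (cases "(\<forall>j\<ge>2. k - w + (j - 2) * (W - w) \<noteq> 0) \<and> (\<forall>j\<le>-1. k - w + j * (W - w) \<noteq> 0)")
    case True
    have dnL: "\<And>j. j \<ge> 2 \<Longrightarrow> k - w + (j - 2) * (W - w) \<noteq> 0" using True by blast
    have cnL: "\<And>j. j \<le> -1 \<Longrightarrow> k - w + j * (W - w) \<noteq> 0" using True by blast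
    note L = pair_LL_Lpart[OF a E h1 h2 D dnL cnL]
    have aL: "a (Lb k) = 0" using L(3) y2z kW by simp
    show ?thesis
    proof (rule wt_concentrated_eq_zero[OF h1])
      show "y1 (Lb (w + k)) = 0" using L(2) aL by simp
      show "y1 (Gb (w + k)) = 0" by (rule gG)
      show "y1 Cb = 0" if wk: "w + k = 0"
      proof -
        have e: "y1 Cb + y2 Cb = a (Lb (- w)) * ((of_int w - of_int w ^ 3) / 12) + a (Lb (- W)) * ((of_int W - of_int W ^ 3) / 12)"
          using E[of Cb] by (simp add: sv_br_right_LC[OF a])
        have m1: "- w = k" using wk by simp
        have m2: "- W = k + (-1) * (W - w)" using wk by simp
        have m3: "(-1::int) \<noteq> 0" by simp
        have "a (Lb (k + (-1) * (W - w))) = 0" using L(1)[of "-1"] by simp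
        then have "a (Lb (- W)) = 0" unfolding m2 .
        then show ?thesis using e y2z[of Cb] aL unfolding m1 by simp
      qed
    qed
  next
    case False
    then have ex: "y1 (Lb (w + k)) = 0" "w + k \<noteq> 0" using Lc by auto
    show ?thesis
      by (rule wt_concentrated_eq_zero[OF h1]) (use ex gG in auto)
  qed
qed

lemma pair_GG_vanish_left:
  assumes a: "a \<in> sv_carrier"
  and E: "\<And>i. y1 i + y2 i = sv_br a (sv_basis (Gb w)) i + sv_br a (sv_basis (Gb W)) i"
  and h1: "\<And>i. y1 i \<noteq> 0 \<Longrightarrow> sv_wt i = w + k" and h2: "\<And>i. y2 i \<noteq> 0 \<Longrightarrow> sv_wt i = W + k"
  and D: "w < W"
  and Gc: "((\<forall>j\<ge>2. k - 2 * w + (j - 3) * (W - w) \<noteq> 0) \<and> (\<forall>j\<le>-1. k - 2 * w + j * (W - w) \<noteq> 0))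
           \<or> y1 (Gb (w + k)) = 0"
  and y2z: "\<And>i. y2 i = 0" and kW: "k \<noteq> 2 * W"
  shows "y1 i = 0"
proof -
  note L = pair_GG_Lpart[OF a E h1 h2 D]
  have aG: "a (Gb k) = 0" using L(3) y2z by simp
  have lL: "y1 (Lb (w + k)) = 0" using L(2) aG by simp
  have gG: "y1 (Gb (w + k)) = 0"
  proof (cases "(\<forall>j\<ge>2. k - 2 * w + (j - 3) * (W - w) \<noteq> 0) \<and> (\<forall>j\<le>-1. k - 2 * w + j * (W - w) \<noteq> 0)")
    case True
    have dnG: "\<And>j. j \<ge> 2 \<Longrightarrow> k - 2 * w + (j - 3) * (W - w) \<noteq> 0" using True by blast
    have cnG: "\<And>j. j \<le> -1 \<Longrightarrow> k - 2 * w + j * (W - w) \<noteq> 0" using True by blast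
    note G = pair_GG_Gpart[OF a E h1 h2 D dnG cnG]
    have kWc: "(of_int k :: complex) \<noteq> 2 * of_int W" using kW by (metis of_int_eq_iff of_int_mult of_int_numeral)
    have aL: "a (Lb k) = 0" using G(3) y2z kWc by simp
    then show ?thesis using G(2) by simp
  next
    case False then show ?thesis using Gc by auto
  qed
  show ?thesis
  proof (rule wt_concentrated_eq_zero[OF h1])
    show "y1 (Lb (w + k)) = 0" by (rule lL)
    show "y1 (Gb (w + k)) = 0" by (rule gG)
    show "y1 Cb = 0" if wk: "w + k = 0"
    proof -
      have e: "y1 Cb + y2 Cb = a (Gb (- w)) * ((of_int w ^ 2 - 1/4) / 3) + a (Gb (- W)) * ((of_int W ^ 2 - 1/4) / 3)"
        using E[of Cb] by (simp add: sv_br_right_GC[OF a])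
      have m1: "- w = k" using wk by simp
      have m2: "- W = k + (-1) * (W - w)" using wk by simp
      have m3: "(-1::int) \<noteq> 0" by simp
      have "a (Gb (k + (-1) * (W - w))) = 0" using L(1)[of "-1"] by simp
      then have "a (Gb (- W)) = 0" unfolding m2 .
      then show ?thesis using e y2z[of Cb] aG unfolding m1 by simp
    qed
  qed
qed

lemma pair_LG_vanish_right:
  assumes a: "a \<in> sv_carrier"
  and E: "\<And>i. y1 i + y2 i = sv_br a (sv_basis (Lb w)) i + sv_br a (sv_basis (Gb W)) i"
  and h1: "\<And>i. y1 i \<noteq> 0 \<Longrightarrow> sv_wt i = w + k" and h2: "\<And>i. y2 i \<noteq> 0 \<Longrightarrow> sv_wt i = W + k"
  and D: "w < W"
  and dn: "\<And>j. j \<ge> 2 \<Longrightarrow> k - 2 * w + (j - 3) * (W - w) \<noteq> 0"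
  and cn: "\<And>j. j \<le> -1 \<Longrightarrow> k - w + j * (W - w) \<noteq> 0 \<and> 2 * k - w + 2 * j * (W - w) \<noteq> 0"
  and y1z: "\<And>i. y1 i = 0" and kw: "k \<noteq> w" and kw2: "2 * k \<noteq> w" and Wk: "W + k \<noteq> 0"
  shows "y2 i = 0"
proof -
  note A = pair_LG_LG_parts[OF a E h1 h2 D dn cn]
  note B = pair_LG_GL_parts[OF a E h1 h2 D dn cn]
  have aL: "a (Lb k) = 0" using A(1) y1z kw by simp
  have kw2c: "(2 * of_int k :: complex) \<noteq> of_int w" using kw2 by (metis of_int_eq_iff of_int_mult of_int_numeral)
  have aG: "a (Gb k) = 0" using B(1) y1z kw2c by simp
  show ?thesis
  proof (rule wt_concentrated_eq_zero[OF h2])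
    show "y2 (Lb (W + k)) = 0" using B(2) aG by simp
    show "y2 (Gb (W + k)) = 0" using A(2) aL by simp
    show "W + k = 0 \<Longrightarrow> y2 Cb = 0" using Wk by simp
  qed
qed

section \<open>Locally inner maps are inner\<close>

locale normalized_locally_inner =
  fixes Psi :: "(sv_idx \<Rightarrow> complex) \<Rightarrow> sv_idx \<Rightarrow> complex"
  assumes lin: "sv_linear Psi" and loc: "locally_inner Psi" and Psi_L0: "Psi (sv_basis (Lb 0)) = (\<lambda>i. 0)"
begin

definition wt_shift :: "int \<Rightarrow> sv_idx \<Rightarrow> sv_idx \<Rightarrow> complex" where
  "wt_shift k g = wt_part k (Psi (sv_basis g)) (sv_wt g)"

lemma basis_inner: "\<exists>c\<in>sv_carrier. Psi (sv_basis g) = sv_br c (sv_basis g)"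
  using loc sv_basis_carrier unfolding locally_inner_def by blast

lemma wt_shift_weight: "wt_shift k g i \<noteq> 0 \<Longrightarrow> sv_wt i = sv_wt g + k"
  by (auto simp: wt_shift_def wt_part_def split: if_splits)

lemma wt_shift_at: "sv_wt i = sv_wt g + k \<Longrightarrow> wt_shift k g i = Psi (sv_basis g) i"
  by (simp add: wt_shift_def wt_part_def)

lemma wt_shift_pair_inner:
  "\<exists>a\<in>sv_carrier. \<forall>i. wt_shift k f i + wt_shift k F i = sv_br a (sv_basis f) i + sv_br a (sv_basis F) i"
proof -
  obtain a where a: "a \<in> sv_carrier" "(\<lambda>i. wt_shift k f i + wt_shift k F i) = sv_br a (\<lambda>i. sv_basis f i + sv_basis F i)"
    using wt_part_pair_in_br_space[OF lin loc] unfolding br_space_def wt_shift_def by blast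
  then show ?thesis using sv_br_add_right[OF sv_basis_carrier sv_basis_carrier, of a f F] by metis
qed

lemma wt_shift_L0: "wt_shift k (Lb 0) i = 0"
  by (simp add: wt_shift_def wt_part_def Psi_L0)

lemma wt_shift_Cb: "wt_shift k Cb i = 0"
  using basis_inner[of Cb] by (auto simp: wt_shift_def wt_part_def sv_br_right_C)

lemma wt_shift_far_Lb:
  assumes k: "k \<noteq> 0" and W: "W > 2 * \<bar>k\<bar>"
  shows "wt_shift k (Lb W) i = 0"
proof -
  obtain a where a: "a \<in> sv_carrier" "\<And>i. wt_shift k (Lb 0) i + wt_shift k (Lb W) i = sv_br a (sv_basis (Lb 0)) i + sv_br a (sv_basis (Lb W)) i"
    using wt_shift_pair_inner by blast
  show ?thesis
  proof (rule pair_LL_vanish_right[OF a(1) a(2)])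
    show "wt_shift k (Lb 0) i \<noteq> 0 \<Longrightarrow> sv_wt i = 0 + k" for i using wt_shift_weight by fastforce
    show "wt_shift k (Lb W) i \<noteq> 0 \<Longrightarrow> sv_wt i = W + k" for i using wt_shift_weight by fastforce
    show "k - 0 + (j - 2) * (W - 0) \<noteq> 0" for j by (rule small_plus_multiple_ne_zero) (use W k in auto)
    show "k - 0 + j * (W - 0) \<noteq> 0" if "j \<le> -1" for j by (rule small_plus_nonzero_multiple_ne_zero) (use W that in auto)
    show "2 * k - 0 + (2 * j - 3) * (W - 0) \<noteq> 0" for j
    proof (rule small_plus_nonzero_multiple_ne_zero)
      show "2 * j - 3 \<noteq> 0" by presburger
    qed (use W in auto)
    show "2 * k - 0 + 2 * j * (W - 0) \<noteq> 0" if "j \<le> -1" for j by (rule small_plus_nonzero_multiple_ne_zero) (use W that in auto)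
  qed (use W k wt_shift_L0 in auto)
qed

lemma wt_shift_far_Gb:
  assumes k: "k \<noteq> 0" and W: "W > 2 * \<bar>k\<bar>"
  shows "wt_shift k (Gb W) i = 0"
proof -
  obtain a where a: "a \<in> sv_carrier" "\<And>i. wt_shift k (Lb 0) i + wt_shift k (Gb W) i = sv_br a (sv_basis (Lb 0)) i + sv_br a (sv_basis (Gb W)) i"
    using wt_shift_pair_inner by blast
  show ?thesis
  proof (rule pair_LG_vanish_right[OF a(1) a(2)])
    show "wt_shift k (Lb 0) i \<noteq> 0 \<Longrightarrow> sv_wt i = 0 + k" for i using wt_shift_weight by fastforce
    show "wt_shift k (Gb W) i \<noteq> 0 \<Longrightarrow> sv_wt i = W + k" for i using wt_shift_weight by fastforce
    show "k - 2 * 0 + (j - 3) * (W - 0) \<noteq> 0" for j by (rule small_plus_multiple_ne_zero) (use W k in auto)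
    show "k - 0 + j * (W - 0) \<noteq> 0 \<and> 2 * k - 0 + 2 * j * (W - 0) \<noteq> 0" if "j \<le> -1" for j
      using small_plus_nonzero_multiple_ne_zero[of "W - 0" "k - 0" j]
        small_plus_nonzero_multiple_ne_zero[of "W - 0" "2 * k - 0" "2 * j"] W that by auto
  qed (use W k wt_shift_L0 in auto)
qed

text \<open>A basis vector of weight w is paired with one of weight \<open>W = w + D\<close>, where D exceeds every
  weight difference that could make a coefficient of the recurrence vanish.\<close>

lemma wt_shift_Lb:
  assumes k: "k \<noteq> 0"
  shows "wt_shift k (Lb w) i = 0"
proof -
  define D where "D = 4 * \<bar>k\<bar> + 2 * \<bar>w\<bar> + 1"
  define W where "W = w + D"
  have WD: "W - w = D" and D0: "D > 0" and W2: "W > 2 * \<bar>k\<bar>" by (simp_all add: W_def D_def)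
  obtain a where a: "a \<in> sv_carrier" "\<And>i. wt_shift k (Lb w) i + wt_shift k (Lb W) i = sv_br a (sv_basis (Lb w)) i + sv_br a (sv_basis (Lb W)) i"
    using wt_shift_pair_inner by blast
  show ?thesis
  proof (rule pair_LL_vanish_left[OF a(1) a(2)])
    show "wt_shift k (Lb w) i \<noteq> 0 \<Longrightarrow> sv_wt i = w + k" for i using wt_shift_weight by fastforce
    show "wt_shift k (Lb W) i \<noteq> 0 \<Longrightarrow> sv_wt i = W + k" for i using wt_shift_weight by fastforce
    show "w < W" using D0 by (simp add: W_def)
    show "2 * k - w + (2 * j - 3) * (W - w) \<noteq> 0" for j unfolding WD
    proof (rule small_plus_nonzero_multiple_ne_zero)
      show "2 * j - 3 \<noteq> 0" by presburger
    qed (use D0 in \<open>auto simp: D_def\<close>)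
    show "2 * k - w + 2 * j * (W - w) \<noteq> 0" if "j \<le> -1" for j
      unfolding WD by (rule small_plus_nonzero_multiple_ne_zero) (use D0 that in \<open>auto simp: D_def\<close>)
    show "((\<forall>j\<ge>2. k - w + (j - 2) * (W - w) \<noteq> 0) \<and> (\<forall>j\<le>-1. k - w + j * (W - w) \<noteq> 0))
         \<or> (wt_shift k (Lb w) (Lb (w + k)) = 0 \<and> w + k \<noteq> 0)"
    proof (cases "k = w")
      case True
      obtain c where c: "c \<in> sv_carrier" "Psi (sv_basis (Lb w)) = sv_br c (sv_basis (Lb w))" using basis_inner by blast
      have "wt_shift k (Lb w) (Lb (w + k)) = sv_br c (sv_basis (Lb w)) (Lb (w + k))"
        using wt_shift_at[of "Lb (w + k)" "Lb w" k] c(2) by simp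
      also have "\<dots> = 0" using True by (simp add: sv_br_right_LL[OF c(1)])
      finally show ?thesis using True k by simp
    next
      case False
      then show ?thesis unfolding WD
        using small_plus_multiple_ne_zero[of D "k - w"] D0 by (auto simp: D_def)
    qed
    show "wt_shift k (Lb W) i = 0" for i by (rule wt_shift_far_Lb[OF k W2])
  qed (use W2 in auto)
qed

lemma wt_shift_Gb:
  assumes k: "k \<noteq> 0"
  shows "wt_shift k (Gb w) i = 0"
proof -
  define D where "D = 4 * \<bar>k\<bar> + 2 * \<bar>w\<bar> + 1"
  define W where "W = w + D"
  have WD: "W - w = D" and D0: "D > 0" and W2: "W > 2 * \<bar>k\<bar>" by (simp_all add: W_def D_def)
  obtain a where a: "a \<in> sv_carrier" "\<And>i. wt_shift k (Gb w) i + wt_shift k (Gb W) i = sv_br a (sv_basis (Gb w)) i + sv_br a (sv_basis (Gb W)) i"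
    using wt_shift_pair_inner by blast
  show ?thesis
  proof (rule pair_GG_vanish_left[OF a(1) a(2)])
    show "wt_shift k (Gb w) i \<noteq> 0 \<Longrightarrow> sv_wt i = w + k" for i using wt_shift_weight by fastforce
    show "wt_shift k (Gb W) i \<noteq> 0 \<Longrightarrow> sv_wt i = W + k" for i using wt_shift_weight by fastforce
    show "w < W" using D0 by (simp add: W_def)
    show "((\<forall>j\<ge>2. k - 2 * w + (j - 3) * (W - w) \<noteq> 0) \<and> (\<forall>j\<le>-1. k - 2 * w + j * (W - w) \<noteq> 0))
         \<or> wt_shift k (Gb w) (Gb (w + k)) = 0"
    proof (cases "k = 2 * w")
      case True
      obtain c where c: "c \<in> sv_carrier" "Psi (sv_basis (Gb w)) = sv_br c (sv_basis (Gb w))" using basis_inner by blast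
      have "wt_shift k (Gb w) (Gb (w + k)) = sv_br c (sv_basis (Gb w)) (Gb (w + k))"
        using wt_shift_at[of "Gb (w + k)" "Gb w" k] c(2) by simp
      also have "\<dots> = 0" using True by (simp add: sv_br_right_GG[OF c(1)])
      finally show ?thesis by simp
    next
      case False
      then show ?thesis unfolding WD
        using small_plus_multiple_ne_zero[of D "k - 2 * w"] D0 by (auto simp: D_def)
    qed
    show "wt_shift k (Gb W) i = 0" for i by (rule wt_shift_far_Gb[OF k W2])
  qed (use W2 in auto)
qed

lemma wt_shift_zero: "k \<noteq> 0 \<Longrightarrow> wt_shift k g i = 0"
  by (cases g) (simp_all add: wt_shift_Lb wt_shift_Gb wt_shift_Cb)

definition wt0_defect :: "complex \<Rightarrow> complex \<Rightarrow> sv_idx \<Rightarrow> sv_idx \<Rightarrow> complex" where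
  "wt0_defect l m g = (\<lambda>i. wt_shift 0 g i - sv_br (zero_mode l m) (sv_basis g) i)"

lemma wt0_defect_weight: "wt0_defect l m g i \<noteq> 0 \<Longrightarrow> sv_wt i = sv_wt g + 0"
  using wt_shift_weight[of 0 g i] zero_mode_br_off_diagonal[of i g] unfolding wt0_defect_def by fastforce

lemma wt0_defect_pair_inner:
  "\<exists>a\<in>sv_carrier. \<forall>i. wt0_defect l m f i + wt0_defect l m F i = sv_br a (sv_basis f) i + sv_br a (sv_basis F) i"
proof -
  obtain a where a: "a \<in> sv_carrier" "\<And>i. wt_shift 0 f i + wt_shift 0 F i = sv_br a (sv_basis f) i + sv_br a (sv_basis F) i"
    using wt_shift_pair_inner by blast
  show ?thesis
  proof (intro bexI allI)
    fix i
    show "wt0_defect l m f i + wt0_defect l m F i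
        = sv_br (\<lambda>k. a k - zero_mode l m k) (sv_basis f) i + sv_br (\<lambda>k. a k - zero_mode l m k) (sv_basis F) i"
      using a(2)[of i] unfolding wt0_defect_def sv_br_diff_left[OF a(1) zero_mode_carrier] by simp
  qed (rule sv_carrier_diff[OF a(1) zero_mode_carrier])
qed

lemma wt0_defect_L0: "wt0_defect l m (Lb 0) i = 0"
  unfolding wt0_defect_def wt_shift_L0
  by (cases i) (auto simp: sv_br_right_LL[OF zero_mode_carrier] sv_br_right_LG[OF zero_mode_carrier] sv_br_right_LC[OF zero_mode_carrier])

lemma wt0_defect_Cb: "wt0_defect l m Cb i = 0"
  by (simp add: wt0_defect_def wt_shift_Cb sv_br_right_C)

text \<open>The G_0-coefficient of \<open>[a, G_0]\<close> vanishes for every a, since \<open>[L_0, G_0] = 0\<close>.\<close>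

lemma wt0_defect_G0: "wt0_defect l m (Gb 0) (Gb 0) = 0"
proof -
  obtain c where c: "c \<in> sv_carrier" "Psi (sv_basis (Gb 0)) = sv_br c (sv_basis (Gb 0))" using basis_inner by blast
  have "wt_shift 0 (Gb 0) (Gb 0) = sv_br c (sv_basis (Gb 0)) (Gb 0)" using wt_shift_at[of "Gb 0" "Gb 0" 0] c(2) by simp
  then show ?thesis by (simp add: wt0_defect_def sv_br_right_GG[OF c(1)] sv_br_right_GG[OF zero_mode_carrier])
qed

lemma wt0_defect_L1_vanishes: "\<exists>l m. \<forall>i. wt0_defect l m (Lb 1) i = 0"
proof -
  obtain c where c: "c \<in> sv_carrier" "Psi (sv_basis (Lb 1)) = sv_br c (sv_basis (Lb 1))" using basis_inner by blast
  have "wt0_defect (c (Lb 0)) (c (Gb 0)) (Lb 1) i = 0" for i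
  proof (cases "sv_wt i = 1")
    case True
    then have "wt_shift 0 (Lb 1) i = sv_br c (sv_basis (Lb 1)) i" using wt_shift_at[of i "Lb 1" 0] c(2) by simp
    moreover have "sv_br c (sv_basis (Lb 1)) i = sv_br (zero_mode (c (Lb 0)) (c (Gb 0))) (sv_basis (Lb 1)) i"
      using True by (cases i) (auto simp: sv_br_right_LL[OF c(1)] sv_br_right_LG[OF c(1)]
          sv_br_right_LL[OF zero_mode_carrier] sv_br_right_LG[OF zero_mode_carrier])
    ultimately show ?thesis by (simp add: wt0_defect_def)
  next
    case False
    then show ?thesis using wt0_defect_weight[of _ _ "Lb 1" i] by auto
  qed
  then show ?thesis by blast
qed

context
  fixes l m :: complex
  assumes L1: "\<And>i. wt0_defect l m (Lb 1) i = 0"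
begin

lemma wt0_defect_far_Lb:
  assumes W: "W \<ge> 4"
  shows "wt0_defect l m (Lb W) i = 0"
proof -
  obtain a where a: "a \<in> sv_carrier" "\<And>i. wt0_defect l m (Lb 1) i + wt0_defect l m (Lb W) i = sv_br a (sv_basis (Lb 1)) i + sv_br a (sv_basis (Lb W)) i"
    using wt0_defect_pair_inner by blast
  show ?thesis
  proof (rule pair_LL_vanish_right[OF a(1) a(2)])
    show "wt0_defect l m (Lb 1) i \<noteq> 0 \<Longrightarrow> sv_wt i = 1 + 0" for i using wt0_defect_weight by fastforce
    show "wt0_defect l m (Lb W) i \<noteq> 0 \<Longrightarrow> sv_wt i = W + 0" for i using wt0_defect_weight by fastforce
    show "0 - 1 + (j - 2) * (W - 1) \<noteq> 0" for j by (rule small_plus_multiple_ne_zero) (use W in auto)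
    show "0 - 1 + j * (W - 1) \<noteq> 0" for j by (rule small_plus_multiple_ne_zero) (use W in auto)
    show "2 * 0 - 1 + (2 * j - 3) * (W - 1) \<noteq> 0" for j by (rule small_plus_multiple_ne_zero) (use W in auto)
    show "2 * 0 - 1 + 2 * j * (W - 1) \<noteq> 0" for j by (rule small_plus_multiple_ne_zero) (use W in auto)
  qed (use W L1 in auto)
qed

lemma wt0_defect_far_Gb:
  assumes W: "W \<ge> 4"
  shows "wt0_defect l m (Gb W) i = 0"
proof -
  obtain a where a: "a \<in> sv_carrier" "\<And>i. wt0_defect l m (Lb 1) i + wt0_defect l m (Gb W) i = sv_br a (sv_basis (Lb 1)) i + sv_br a (sv_basis (Gb W)) i"
    using wt0_defect_pair_inner by blast
  show ?thesis
  proof (rule pair_LG_vanish_right[OF a(1) a(2)])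
    show "wt0_defect l m (Lb 1) i \<noteq> 0 \<Longrightarrow> sv_wt i = 1 + 0" for i using wt0_defect_weight by fastforce
    show "wt0_defect l m (Gb W) i \<noteq> 0 \<Longrightarrow> sv_wt i = W + 0" for i using wt0_defect_weight by fastforce
    show "0 - 2 * 1 + (j - 3) * (W - 1) \<noteq> 0" for j by (rule small_plus_multiple_ne_zero) (use W in auto)
    show "0 - 1 + j * (W - 1) \<noteq> 0 \<and> 2 * 0 - 1 + 2 * j * (W - 1) \<noteq> 0" for j
      using small_plus_multiple_ne_zero[of "W - 1" "0 - 1" j] small_plus_multiple_ne_zero[of "W - 1" "2 * 0 - 1" "2 * j"] W by auto
  qed (use W L1 in auto)
qed

lemma wt0_defect_Lb: "wt0_defect l m (Lb w) i = 0"
proof (cases "w = 0")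
  case True
  then show ?thesis by (simp add: wt0_defect_L0)
next
  case w: False
  define D where "D = 2 * \<bar>w\<bar> + 4"
  define W where "W = w + D"
  have WD: "W - w = D" and D0: "D > 0" and W4: "W \<ge> 4" by (simp_all add: W_def D_def)
  obtain a where a: "a \<in> sv_carrier" "\<And>i. wt0_defect l m (Lb w) i + wt0_defect l m (Lb W) i = sv_br a (sv_basis (Lb w)) i + sv_br a (sv_basis (Lb W)) i"
    using wt0_defect_pair_inner by blast
  show ?thesis
  proof (rule pair_LL_vanish_left[OF a(1) a(2)])
    show "wt0_defect l m (Lb w) i \<noteq> 0 \<Longrightarrow> sv_wt i = w + 0" for i using wt0_defect_weight by fastforce
    show "wt0_defect l m (Lb W) i \<noteq> 0 \<Longrightarrow> sv_wt i = W + 0" for i using wt0_defect_weight by fastforce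
    show "w < W" using D0 by (simp add: W_def)
    show "2 * 0 - w + (2 * j - 3) * (W - w) \<noteq> 0" for j
      unfolding WD by (rule small_plus_multiple_ne_zero) (use D0 w in \<open>auto simp: D_def\<close>)
    show "2 * 0 - w + 2 * j * (W - w) \<noteq> 0" for j
      unfolding WD by (rule small_plus_multiple_ne_zero) (use D0 w in \<open>auto simp: D_def\<close>)
    show "((\<forall>j\<ge>2. 0 - w + (j - 2) * (W - w) \<noteq> 0) \<and> (\<forall>j\<le>-1. 0 - w + j * (W - w) \<noteq> 0))
         \<or> (wt0_defect l m (Lb w) (Lb (w + 0)) = 0 \<and> w + 0 \<noteq> 0)"
      unfolding WD using small_plus_multiple_ne_zero[of D "0 - w"] D0 w by (auto simp: D_def)
    show "wt0_defect l m (Lb W) i = 0" for i by (rule wt0_defect_far_Lb[OF W4])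
  qed (use W4 in auto)
qed

lemma wt0_defect_Gb: "wt0_defect l m (Gb w) i = 0"
proof -
  define D where "D = 2 * \<bar>w\<bar> + 4"
  define W where "W = w + D"
  have WD: "W - w = D" and D0: "D > 0" and W4: "W \<ge> 4" by (simp_all add: W_def D_def)
  obtain a where a: "a \<in> sv_carrier" "\<And>i. wt0_defect l m (Gb w) i + wt0_defect l m (Gb W) i = sv_br a (sv_basis (Gb w)) i + sv_br a (sv_basis (Gb W)) i"
    using wt0_defect_pair_inner by blast
  show ?thesis
  proof (rule pair_GG_vanish_left[OF a(1) a(2)])
    show "wt0_defect l m (Gb w) i \<noteq> 0 \<Longrightarrow> sv_wt i = w + 0" for i using wt0_defect_weight by fastforce
    show "wt0_defect l m (Gb W) i \<noteq> 0 \<Longrightarrow> sv_wt i = W + 0" for i using wt0_defect_weight by fastforce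
    show "w < W" using D0 by (simp add: W_def)
    show "((\<forall>j\<ge>2. 0 - 2 * w + (j - 3) * (W - w) \<noteq> 0) \<and> (\<forall>j\<le>-1. 0 - 2 * w + j * (W - w) \<noteq> 0))
         \<or> wt0_defect l m (Gb w) (Gb (w + 0)) = 0"
    proof (cases "w = 0")
      case True
      then show ?thesis using wt0_defect_G0 by simp
    next
      case False
      then show ?thesis unfolding WD
        using small_plus_multiple_ne_zero[of D "0 - 2 * w"] D0 by (auto simp: D_def)
    qed
    show "wt0_defect l m (Gb W) i = 0" for i by (rule wt0_defect_far_Gb[OF W4])
  qed (use W4 in auto)
qed

lemma wt0_defect_zero: "wt0_defect l m g i = 0"
  by (cases g) (simp_all add: wt0_defect_Lb wt0_defect_Gb wt0_defect_Cb)

end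

lemma basis_inner_uniform: "\<exists>c\<in>sv_carrier. \<forall>g. Psi (sv_basis g) = sv_br c (sv_basis g)"
proof -
  obtain l m where L1: "\<And>i. wt0_defect l m (Lb 1) i = 0" using wt0_defect_L1_vanishes by blast
  have "Psi (sv_basis g) i = sv_br (zero_mode l m) (sv_basis g) i" for g i
  proof (cases "sv_wt i = sv_wt g")
    case True
    then show ?thesis using wt0_defect_zero[OF L1, of g i] wt_shift_at[of i g 0] by (simp add: wt0_defect_def)
  next
    case False
    then have "Psi (sv_basis g) i = 0" using wt_shift_zero[of "sv_wt i - sv_wt g" g i] wt_shift_at by simp
    then show ?thesis using zero_mode_br_off_diagonal[OF False] by simp
  qed
  then show ?thesis using zero_mode_carrier by blast
qed

end

lemma locally_inner_imp_inner:
  assumes lin: "sv_linear \<Delta>" and loc: "locally_inner \<Delta>"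
  shows "sv_inner \<Delta>"
proof -
  obtain a0 where a0: "a0 \<in> sv_carrier" "\<Delta> (sv_basis (Lb 0)) = sv_br a0 (sv_basis (Lb 0))"
    using loc sv_basis_carrier unfolding locally_inner_def by blast
  define Psi where "Psi x = (\<lambda>i. \<Delta> x i - sv_br a0 x i)" for x
  have "sv_linear Psi"
    using lin sv_linear_br[of a0] unfolding sv_linear_def Psi_def
    by (auto simp: sv_carrier_diff algebra_simps fun_eq_iff)
  moreover have "locally_inner Psi"
    unfolding locally_inner_def
  proof
    fix x assume "x \<in> sv_carrier"
    then obtain b where b: "b \<in> sv_carrier" "\<Delta> x = sv_br b x" using loc unfolding locally_inner_def by blast
    show "\<exists>a\<in>sv_carrier. Psi x = sv_br a x"
      by (rule bexI[OF _ sv_carrier_diff[OF b(1) a0(1)]]) (simp add: Psi_def b(2) sv_br_diff_left[OF b(1) a0(1)])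
  qed
  moreover have "Psi (sv_basis (Lb 0)) = (\<lambda>i. 0)" by (simp add: Psi_def a0(2))
  ultimately interpret normalized_locally_inner Psi by unfold_locales
  obtain c where c: "c \<in> sv_carrier" "\<And>g. Psi (sv_basis g) = sv_br c (sv_basis g)"
    using basis_inner_uniform by blast
  have "\<Delta> (sv_basis g) = sv_br (\<lambda>k. a0 k + c k) (sv_basis g)" for g
    using c(2)[of g] unfolding sv_br_add_left[OF a0(1) c(1)] Psi_def by (auto simp: fun_eq_iff algebra_simps)
  then show ?thesis
    unfolding sv_inner_def using sv_linear_eqI[OF assms(1) sv_linear_br] sv_carrier_add[OF a0(1) c(1)] by blast
qed

lemma sv_local_derivation_locally_inner:
  assumes "sv_local_derivation \<Delta>"
  shows "locally_inner \<Delta>"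
  unfolding locally_inner_def
proof
  fix x assume x: "x \<in> sv_carrier"
  then obtain D where D: "sv_Der D" "\<Delta> x = D x" using assms unfolding sv_local_derivation_def by blast
  then show "\<exists>a\<in>sv_carrier. \<Delta> x = sv_br a x"
    using sv_Der_inner[OF D(1)] x unfolding sv_inner_def by metis
qed

theorem corollary4p4:
  assumes "sv_local_derivation \<Delta>"
  shows "sv_Der \<Delta>"
proof -
  have "sv_linear \<Delta>" using assms unfolding sv_local_derivation_def by blast
  moreover have "locally_inner \<Delta>" using assms by (rule sv_local_derivation_locally_inner)
  ultimately show ?thesis by (intro sv_inner_Der locally_inner_imp_inner)
qed

end
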